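(* Let $(\mathcal C,\otimes,I)$ be a symmetric closed monoidal category and $M$ a commutative monad on $\mathcal C$, and let $A$ be an object. Then the tuple $\langle A\Rightarrow MA,\ \Lambda(q),\ \mathsf{kcomp},\ \mathsf{kident}\rangle$, where $q=\mu_A\circ M\mathsf{app}\circ\tau: M(A\Rightarrow MA)\otimes A\to M((A\Rightarrow MA)\otimes A)\to MMA\to MA$, is a symmetric Eilenberg--Moore $M$-monoid.
   Context: Symmetry $\mathsf{sym}:X\otimes Y\to Y\otimes X$; structural isomorphisms written $\cong$. Closed: $(-)\otimes B\dashv B\Rightarrow(-)$, currying $\Lambda:\mathcal C(X\otimes B,C)\cong\mathcal C(X,B\Rightarrow C)$, counit $\mathsf{app}:(B\Rightarrow C)\otimes B\to C$. $M$ has strength $\tau_{X,Y}:MX\otimes Y\to M(X\otimes Y)$ and left strength $\tau'_{X,Y}=M\mathsf{sym}\circ\tau_{Y,X}\circ\mathsf{sym}: X\otimes MY\to M(X\otimes Y)$; commutativity means $\mu\circ M\tau\circ\tau'=\mu\circ M\tau'\circ\tau: MX\otimes MY\to M(X\otimes Y)$. Kleisli composition: $\mathsf{kcomp}=\Lambda(w):(B\Rightarrow MC)\otimes(X\Rightarrow MB)\to(X\Rightarrow MC)$ where $w=\mu_C\circ M\mathsf{app}\circ\tau'\circ(\mathrm{id}\otimes\mathsf{app})\circ\cong: ((B\Rightarrow MC)\otimes(X\Rightarrow MB))\otimes X\to (B\Rightarrow MC)\otimes((X\Rightarrow MB)\otimes X)\to(B\Rightarrow MC)\otimes MB\to M((B\Rightarrow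 MC)\otimes B)\to MMC\to MC$; $\mathsf{kident}=\Lambda(\eta_X\circ\cong): I\to(X\Rightarrow MX)$ with $\cong: I\otimes X\to X$ (here $X=B=C=A$). A symmetric Eilenberg--Moore $M$-monoid is a tuple $\langle E,a: ME\to E,m: E\otimes E\to E,u: I\to E\rangle$ with $\langle E,a\rangle$ an Eilenberg--Moore $M$-algebra, $\langle E,m,u\rangle$ a monoid, and $a\circ Mm\circ\mu_{E\otimes E}\circ M\tau'_{E,E}\circ\tau_{E,ME}=m\circ(a\otimes a): ME\otimes ME\to E$. *)

theory Defs
  imports Main
begin

text \<open>A category is represented by a type of objects (all elements of the type are objects)
and a type of morphisms with hom-sets; hom-sets are pairwise disjoint, so every morphism has a
unique domain and codomain.  Composition cmp g f means g after f.\<close>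

record ('o,'m) smcc =
  hom :: "'o \<Rightarrow> 'o \<Rightarrow> 'm set"
  cmp :: "'m \<Rightarrow> 'm \<Rightarrow> 'm"
  idn :: "'o \<Rightarrow> 'm"
  tn  :: "'o \<Rightarrow> 'o \<Rightarrow> 'o"
  tnm :: "'m \<Rightarrow> 'm \<Rightarrow> 'm"
  unI :: "'o"
  asc :: "'o \<Rightarrow> 'o \<Rightarrow> 'o \<Rightarrow> 'm"
  lu  :: "'o \<Rightarrow> 'm"
  ru  :: "'o \<Rightarrow> 'm"
  sy  :: "'o \<Rightarrow> 'o \<Rightarrow> 'm"
  ihm :: "'o \<Rightarrow> 'o \<Rightarrow> 'o"
  ev  :: "'o \<Rightarrow> 'o \<Rightarrow> 'm"          (* app : (B => C)*B -> C *)

definition category :: "('o,'m,'z) smcc_scheme \<Rightarrow> bool" where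
  "category C \<longleftrightarrow>
    (\<forall>X Y X' Y' f. f \<in> hom C X Y \<longrightarrow> f \<in> hom C X' Y' \<longrightarrow> X = X' \<and> Y = Y') \<and>
    (\<forall>X. idn C X \<in> hom C X X) \<and>
    (\<forall>X Y Z f g. f \<in> hom C X Y \<longrightarrow> g \<in> hom C Y Z \<longrightarrow> cmp C g f \<in> hom C X Z) \<and>
    (\<forall>X Y f. f \<in> hom C X Y \<longrightarrow> cmp C f (idn C X) = f \<and> cmp C (idn C Y) f = f) \<and>
    (\<forall>W X Y Z f g h. f \<in> hom C W X \<longrightarrow> g \<in> hom C X Y \<longrightarrow> h \<in> hom C Y Z \<longrightarrow>
        cmp C h (cmp C g f) = cmp C (cmp C h g) f)"

definition iso :: "('o,'m,'z) smcc_scheme \<Rightarrow> 'm \<Rightarrow> 'o \<Rightarrow> 'o \<Rightarrow> bool" where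
  "iso C f X Y \<longleftrightarrow> f \<in> hom C X Y \<and>
     (\<exists>g \<in> hom C Y X. cmp C g f = idn C X \<and> cmp C f g = idn C Y)"

definition monoidal :: "('o,'m,'z) smcc_scheme \<Rightarrow> bool" where
  "monoidal C \<longleftrightarrow> category C \<and>
    \<comment> \<open>tensor is a bifunctor\<close>
    (\<forall>X Y X' Y' f g. f \<in> hom C X Y \<longrightarrow> g \<in> hom C X' Y' \<longrightarrow>
        tnm C f g \<in> hom C (tn C X X') (tn C Y Y')) \<and>
    (\<forall>X Y. tnm C (idn C X) (idn C Y) = idn C (tn C X Y)) \<and>
    (\<forall>X Y Z X' Y' Z' f g f' g'. f \<in> hom C X Y \<longrightarrow> g \<in> hom C Y Z \<longrightarrow>
        f' \<in> hom C X' Y' \<longrightarrow> g' \<in> hom C Y' Z' \<longrightarrow>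
        tnm C (cmp C g f) (cmp C g' f') = cmp C (tnm C g g') (tnm C f f')) \<and>
    \<comment> \<open>associator and unitors: natural isomorphisms\<close>
    (\<forall>X Y Z. iso C (asc C X Y Z) (tn C (tn C X Y) Z) (tn C X (tn C Y Z))) \<and>
    (\<forall>X. iso C (lu C X) (tn C (unI C) X) X) \<and>
    (\<forall>X. iso C (ru C X) (tn C X (unI C)) X) \<and>
    (\<forall>X1 X2 X3 Y1 Y2 Y3 f1 f2 f3. f1 \<in> hom C X1 Y1 \<longrightarrow> f2 \<in> hom C X2 Y2 \<longrightarrow> f3 \<in> hom C X3 Y3 \<longrightarrow>
        cmp C (asc C Y1 Y2 Y3) (tnm C (tnm C f1 f2) f3) =
        cmp C (tnm C f1 (tnm C f2 f3)) (asc C X1 X2 X3)) \<and>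
    (\<forall>X Y f. f \<in> hom C X Y \<longrightarrow>
        cmp C (lu C Y) (tnm C (idn C (unI C)) f) = cmp C f (lu C X)) \<and>
    (\<forall>X Y f. f \<in> hom C X Y \<longrightarrow>
        cmp C (ru C Y) (tnm C f (idn C (unI C))) = cmp C f (ru C X)) \<and>
    \<comment> \<open>pentagon\<close>
    (\<forall>W X Y Z. cmp C (asc C W X (tn C Y Z)) (asc C (tn C W X) Y Z) =
        cmp C (tnm C (idn C W) (asc C X Y Z))
          (cmp C (asc C W (tn C X Y) Z) (tnm C (asc C W X Y) (idn C Z)))) \<and>
    \<comment> \<open>triangle\<close>
    (\<forall>X Y. cmp C (tnm C (idn C X) (lu C Y)) (asc C X (unI C) Y) =
        tnm C (ru C X) (idn C Y))"

definition symmetric_monoidal :: "('o,'m,'z) smcc_scheme \<Rightarrow> bool" where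
  "symmetric_monoidal C \<longleftrightarrow> monoidal C \<and>
    (\<forall>X Y. sy C X Y \<in> hom C (tn C X Y) (tn C Y X)) \<and>
    (\<forall>X Y X' Y' f g. f \<in> hom C X Y \<longrightarrow> g \<in> hom C X' Y' \<longrightarrow>
        cmp C (sy C Y Y') (tnm C f g) = cmp C (tnm C g f) (sy C X X')) \<and>
    (\<forall>X Y. cmp C (sy C Y X) (sy C X Y) = idn C (tn C X Y)) \<and>
    \<comment> \<open>hexagon\<close>
    (\<forall>X Y Z. cmp C (asc C Y Z X) (cmp C (sy C X (tn C Y Z)) (asc C X Y Z)) =
        cmp C (tnm C (idn C Y) (sy C X Z))
          (cmp C (asc C Y X Z) (tnm C (sy C X Y) (idn C Z))))"

definition closed :: "('o,'m,'z) smcc_scheme \<Rightarrow> bool" where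
  "closed C \<longleftrightarrow>
    (\<forall>B Z. ev C B Z \<in> hom C (tn C (ihm C B Z) B) Z) \<and>
    (\<forall>X B Z f. f \<in> hom C (tn C X B) Z \<longrightarrow>
        (\<exists>!g. g \<in> hom C X (ihm C B Z) \<and> cmp C (ev C B Z) (tnm C g (idn C B)) = f))"

definition symmetric_closed_monoidal :: "('o,'m,'z) smcc_scheme \<Rightarrow> bool" where
  "symmetric_closed_monoidal C \<longleftrightarrow> symmetric_monoidal C \<and> closed C"

definition curry_m :: "('o,'m,'z) smcc_scheme \<Rightarrow> 'o \<Rightarrow> 'o \<Rightarrow> 'o \<Rightarrow> 'm \<Rightarrow> 'm" where
  "curry_m C X B Z f = (THE g. g \<in> hom C X (ihm C B Z) \<and> cmp C (ev C B Z) (tnm C g (idn C B)) = f)"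

record ('o,'m) smonad =
  Mo :: "'o \<Rightarrow> 'o"
  Mm :: "'m \<Rightarrow> 'm"
  eta :: "'o \<Rightarrow> 'm"
  mu :: "'o \<Rightarrow> 'm"
  st :: "'o \<Rightarrow> 'o \<Rightarrow> 'm"

definition monad :: "('o,'m,'z) smcc_scheme \<Rightarrow> ('o,'m,'y) smonad_scheme \<Rightarrow> bool" where
  "monad C T \<longleftrightarrow>
    (\<forall>X Y f. f \<in> hom C X Y \<longrightarrow> Mm T f \<in> hom C (Mo T X) (Mo T Y)) \<and>
    (\<forall>X. Mm T (idn C X) = idn C (Mo T X)) \<and>
    (\<forall>X Y Z f g. f \<in> hom C X Y \<longrightarrow> g \<in> hom C Y Z \<longrightarrow> Mm T (cmp C g f) = cmp C (Mm T g) (Mm T f)) \<and>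
    (\<forall>X. eta T X \<in> hom C X (Mo T X)) \<and>
    (\<forall>X. mu T X \<in> hom C (Mo T (Mo T X)) (Mo T X)) \<and>
    (\<forall>X Y f. f \<in> hom C X Y \<longrightarrow> cmp C (eta T Y) f = cmp C (Mm T f) (eta T X)) \<and>
    (\<forall>X Y f. f \<in> hom C X Y \<longrightarrow> cmp C (mu T Y) (Mm T (Mm T f)) = cmp C (Mm T f) (mu T X)) \<and>
    (\<forall>X. cmp C (mu T X) (Mm T (mu T X)) = cmp C (mu T X) (mu T (Mo T X))) \<and>
    (\<forall>X. cmp C (mu T X) (eta T (Mo T X)) = idn C (Mo T X)) \<and>
    (\<forall>X. cmp C (mu T X) (Mm T (eta T X)) = idn C (Mo T X))"

definition strong_monad :: "('o,'m,'z) smcc_scheme \<Rightarrow> ('o,'m,'y) smonad_scheme \<Rightarrow> bool" where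
  "strong_monad C T \<longleftrightarrow> monad C T \<and>
    (\<forall>X Y. st T X Y \<in> hom C (tn C (Mo T X) Y) (Mo T (tn C X Y))) \<and>
    (\<forall>X Y X' Y' f g. f \<in> hom C X Y \<longrightarrow> g \<in> hom C X' Y' \<longrightarrow>
        cmp C (st T Y Y') (tnm C (Mm T f) g) = cmp C (Mm T (tnm C f g)) (st T X X')) \<and>
    (\<forall>X. cmp C (Mm T (ru C X)) (st T X (unI C)) = ru C (Mo T X)) \<and>
    (\<forall>X Y Z. cmp C (st T X (tn C Y Z)) (asc C (Mo T X) Y Z) =
        cmp C (Mm T (asc C X Y Z)) (cmp C (st T (tn C X Y) Z) (tnm C (st T X Y) (idn C Z)))) \<and>
    (\<forall>X Y. cmp C (st T X Y) (tnm C (eta T X) (idn C Y)) = eta T (tn C X Y)) \<and>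
    (\<forall>X Y. cmp C (st T X Y) (tnm C (mu T X) (idn C Y)) =
        cmp C (mu T (tn C X Y)) (cmp C (Mm T (st T X Y)) (st T (Mo T X) Y)))"

definition lst :: "('o,'m,'z) smcc_scheme \<Rightarrow> ('o,'m,'y) smonad_scheme \<Rightarrow> 'o \<Rightarrow> 'o \<Rightarrow> 'm" where
  "lst C T X Y = cmp C (Mm T (sy C Y X)) (cmp C (st T Y X) (sy C X (Mo T Y)))"

definition commutative_monad :: "('o,'m,'z) smcc_scheme \<Rightarrow> ('o,'m,'y) smonad_scheme \<Rightarrow> bool" where
  "commutative_monad C T \<longleftrightarrow> strong_monad C T \<and>
    (\<forall>X Y. cmp C (mu T (tn C X Y)) (cmp C (Mm T (st T X Y)) (lst C T (Mo T X) Y)) =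
           cmp C (mu T (tn C X Y)) (cmp C (Mm T (lst C T X Y)) (st T X (Mo T Y))))"

definition em_algebra :: "('o,'m,'z) smcc_scheme \<Rightarrow> ('o,'m,'y) smonad_scheme \<Rightarrow> 'o \<Rightarrow> 'm \<Rightarrow> bool" where
  "em_algebra C T E a \<longleftrightarrow> a \<in> hom C (Mo T E) E \<and>
     cmp C a (eta T E) = idn C E \<and>
     cmp C a (Mm T a) = cmp C a (mu T E)"

definition monoid_obj :: "('o,'m,'z) smcc_scheme \<Rightarrow> 'o \<Rightarrow> 'm \<Rightarrow> 'm \<Rightarrow> bool" where
  "monoid_obj C E m u \<longleftrightarrow> m \<in> hom C (tn C E E) E \<and> u \<in> hom C (unI C) E \<and>
     cmp C m (tnm C m (idn C E)) = cmp C m (cmp C (tnm C (idn C E) m) (asc C E E E)) \<and>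
     cmp C m (tnm C u (idn C E)) = lu C E \<and>
     cmp C m (tnm C (idn C E) u) = ru C E"

definition sym_em_monoid ::
  "('o,'m,'z) smcc_scheme \<Rightarrow> ('o,'m,'y) smonad_scheme \<Rightarrow> 'o \<Rightarrow> 'm \<Rightarrow> 'm \<Rightarrow> 'm \<Rightarrow> bool" where
  "sym_em_monoid C T E a m u \<longleftrightarrow> em_algebra C T E a \<and> monoid_obj C E m u \<and>
     cmp C a (cmp C (Mm T m) (cmp C (mu T (tn C E E)) (cmp C (Mm T (lst C T E E)) (st T E (Mo T E))))) =
     cmp C m (tnm C a a)"

definition kcomp :: "('o,'m,'z) smcc_scheme \<Rightarrow> ('o,'m,'y) smonad_scheme \<Rightarrow> 'o \<Rightarrow> 'm" where
  "kcomp C T A = (let H = ihm C A (Mo T A) in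
     curry_m C (tn C H H) A (Mo T A)
       (cmp C (mu T A) (cmp C (Mm T (ev C A (Mo T A))) (cmp C (lst C T H A)
          (cmp C (tnm C (idn C H) (ev C A (Mo T A))) (asc C H H A))))))"

definition kident :: "('o,'m,'z) smcc_scheme \<Rightarrow> ('o,'m,'y) smonad_scheme \<Rightarrow> 'o \<Rightarrow> 'm" where
  "kident C T A = curry_m C (unI C) A (Mo T A) (cmp C (eta T A) (lu C A))"

definition qmap :: "('o,'m,'z) smcc_scheme \<Rightarrow> ('o,'m,'y) smonad_scheme \<Rightarrow> 'o \<Rightarrow> 'm" where
  "qmap C T A = (let H = ihm C A (Mo T A) in
     cmp C (mu T A) (cmp C (Mm T (ev C A (Mo T A))) (st T H A)))"

end

theory Submission
  imports Defs
begin

text \<open>All four structure maps on \<open>A \<Rightarrow> MA\<close> are curried, and a curried map is determined by its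
  uncurried form. Each axiom is therefore checked by uncurrying both sides and rewriting them, with
  the monad, strength and coherence laws, to a common normal form. The Eilenberg--Moore and monoid
  laws need only a strong monad: they are the unit and associativity laws of Kleisli composition,
  transported along the left strength, whose unit, multiplication and associativity laws follow from
  those of the strength through the symmetry. Commutativity enters only in the compatibility of the
  algebra with the multiplication, where it swaps the order in which two \<open>M\<close>-computations of
  Kleisli maps are run.\<close>

locale symmetric_closed_monoidal_category =
  fixes C :: "('o,'m) smcc"
  assumes smcc: "symmetric_closed_monoidal C"
begin

abbreviation comp (infixr "\<cdot>" 55) where "g \<cdot> f \<equiv> cmp C g f"
abbreviation tensor (infix "\<otimes>" 60) where "f \<otimes> g \<equiv> tnm C f g"
abbreviation tensor_obj (infix "\<odot>" 60) where "X \<odot> Y \<equiv> tn C X Y"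
abbreviation "idm \<equiv> idn C"
abbreviation "\<I> \<equiv> unI C"
abbreviation "\<alpha> \<equiv> asc C"
abbreviation "\<sigma> \<equiv> sy C"
abbreviation "lunit \<equiv> lu C"
abbreviation "runit \<equiv> ru C"

definition arr where "arr f \<longleftrightarrow> (\<exists>X Y. f \<in> hom C X Y)"
definition src where "src f = (THE X. \<exists>Y. f \<in> hom C X Y)"
definition tgt where "tgt f = (THE Y. \<exists>X. f \<in> hom C X Y)"

lemma category_C: "category C"
  and monoidal_C: "monoidal C"
  and symmetric_monoidal_C: "symmetric_monoidal C"
  and closed_C: "closed C"
  using smcc unfolding symmetric_closed_monoidal_def symmetric_monoidal_def monoidal_def by simp_all

lemma hom_unique: "f \<in> hom C X Y \<Longrightarrow> f \<in> hom C X' Y' \<Longrightarrow> X = X' \<and> Y = Y'"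
  using category_C by (simp add: category_def)

lemma hom_iff: "f \<in> hom C X Y \<longleftrightarrow> arr f \<and> src f = X \<and> tgt f = Y"
proof
  assume f: "f \<in> hom C X Y"
  have "src f = X" unfolding src_def using f hom_unique by (intro the_equality) blast+
  moreover have "tgt f = Y" unfolding tgt_def using f hom_unique by (intro the_equality) blast+
  ultimately show "arr f \<and> src f = X \<and> tgt f = Y" using f arr_def by blast
next
  assume f: "arr f \<and> src f = X \<and> tgt f = Y"
  then obtain X' Y' where f': "f \<in> hom C X' Y'" using arr_def by blast
  have "src f = X'" unfolding src_def using f' hom_unique by (intro the_equality) blast+
  moreover have "tgt f = Y'" unfolding tgt_def using f' hom_unique by (intro the_equality) blast+
  ultimately show "f \<in> hom C X Y" using f f' by simp
qed

lemma id_hom: "idm X \<in> hom C X X"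
  using category_C by (simp add: category_def)

lemma comp_hom: "f \<in> hom C X Y \<Longrightarrow> g \<in> hom C Y Z \<Longrightarrow> g \<cdot> f \<in> hom C X Z"
  using category_C by (simp add: category_def)

lemma tensor_hom: "f \<in> hom C X Y \<Longrightarrow> g \<in> hom C X' Y' \<Longrightarrow> f \<otimes> g \<in> hom C (X \<odot> X') (Y \<odot> Y')"
  using monoidal_C by (simp add: monoidal_def)

lemma arr_id [simp]: "arr (idm X)" and src_id [simp]: "src (idm X) = X" and tgt_id [simp]: "tgt (idm X) = X"
  using id_hom hom_iff by blast+

lemma arr_comp [simp]: "arr f \<Longrightarrow> arr g \<Longrightarrow> src g = tgt f \<Longrightarrow> arr (g \<cdot> f)"
  and src_comp [simp]: "arr f \<Longrightarrow> arr g \<Longrightarrow> src g = tgt f \<Longrightarrow> src (g \<cdot> f) = src f"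
  and tgt_comp [simp]: "arr f \<Longrightarrow> arr g \<Longrightarrow> src g = tgt f \<Longrightarrow> tgt (g \<cdot> f) = tgt g"
  using comp_hom[of f "src f" "tgt f" g "tgt g"] hom_iff by auto

lemma arr_tensor [simp]: "arr f \<Longrightarrow> arr g \<Longrightarrow> arr (f \<otimes> g)"
  and src_tensor [simp]: "arr f \<Longrightarrow> arr g \<Longrightarrow> src (f \<otimes> g) = src f \<odot> src g"
  and tgt_tensor [simp]: "arr f \<Longrightarrow> arr g \<Longrightarrow> tgt (f \<otimes> g) = tgt f \<odot> tgt g"
  using tensor_hom[of f "src f" "tgt f" g "src g" "tgt g"] hom_iff by auto

lemma comp_assoc [simp]:
  assumes "arr f" "arr g" "arr h" "src g = tgt f" "src h = tgt g"
  shows "(h \<cdot> g) \<cdot> f = h \<cdot> (g \<cdot> f)"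
proof -
  have "f \<in> hom C (src f) (tgt f)" "g \<in> hom C (tgt f) (tgt g)" "h \<in> hom C (tgt g) (tgt h)"
    using assms hom_iff by auto
  then show ?thesis using category_C unfolding category_def by metis
qed

lemma id_comp [simp]: "arr f \<Longrightarrow> tgt f = X \<Longrightarrow> idm X \<cdot> f = f"
  and comp_id [simp]: "arr f \<Longrightarrow> src f = X \<Longrightarrow> f \<cdot> idm X = f"
  using category_C hom_iff[of f "src f" "tgt f"] by (auto simp: category_def)

lemma tensor_id [simp]: "idm X \<otimes> idm Y = idm (X \<odot> Y)"
  using monoidal_C by (simp add: monoidal_def)

lemma interchange: "arr f \<Longrightarrow> arr g \<Longrightarrow> src g = tgt f \<Longrightarrow> arr f' \<Longrightarrow> arr g' \<Longrightarrow> src g' = tgt f' \<Longrightarrow>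
  (g \<cdot> f) \<otimes> (g' \<cdot> f') = (g \<otimes> g') \<cdot> (f \<otimes> f')"
  using monoidal_C hom_iff[of f "src f" "tgt f"] hom_iff[of g "tgt f" "tgt g"]
    hom_iff[of f' "src f'" "tgt f'"] hom_iff[of g' "tgt f'" "tgt g'"]
  by (simp add: monoidal_def)

lemma iso_assoc: "iso C (\<alpha> X Y Z) ((X \<odot> Y) \<odot> Z) (X \<odot> (Y \<odot> Z))"
  and iso_lunit: "iso C (lunit X) (\<I> \<odot> X) X"
  and iso_runit: "iso C (runit X) (X \<odot> \<I>) X"
  using monoidal_C by (simp_all add: monoidal_def)

lemma assoc_nat: "arr f1 \<Longrightarrow> arr f2 \<Longrightarrow> arr f3 \<Longrightarrow> src f1 = X1 \<Longrightarrow> src f2 = X2 \<Longrightarrow> src f3 = X3 \<Longrightarrow>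
   tgt f1 = Y1 \<Longrightarrow> tgt f2 = Y2 \<Longrightarrow> tgt f3 = Y3 \<Longrightarrow>
   \<alpha> Y1 Y2 Y3 \<cdot> ((f1 \<otimes> f2) \<otimes> f3) = (f1 \<otimes> (f2 \<otimes> f3)) \<cdot> \<alpha> X1 X2 X3"
  using monoidal_C hom_iff[of f1 X1 Y1] hom_iff[of f2 X2 Y2] hom_iff[of f3 X3 Y3]
  by (simp add: monoidal_def)

lemma lunit_nat: "arr f \<Longrightarrow> src f = X \<Longrightarrow> tgt f = Y \<Longrightarrow> lunit Y \<cdot> (idm \<I> \<otimes> f) = f \<cdot> lunit X"
  and runit_nat: "arr f \<Longrightarrow> src f = X \<Longrightarrow> tgt f = Y \<Longrightarrow> runit Y \<cdot> (f \<otimes> idm \<I>) = f \<cdot> runit X"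
  using monoidal_C hom_iff[of f X Y] by (simp_all add: monoidal_def)

lemma pentagon: "\<alpha> W X (Y \<odot> Z) \<cdot> \<alpha> (W \<odot> X) Y Z =
    (idm W \<otimes> \<alpha> X Y Z) \<cdot> (\<alpha> W (X \<odot> Y) Z \<cdot> (\<alpha> W X Y \<otimes> idm Z))"
  and triangle: "(idm X \<otimes> lunit Y) \<cdot> \<alpha> X \<I> Y = runit X \<otimes> idm Y"
  using monoidal_C by (simp_all add: monoidal_def)

lemma sym_hom: "\<sigma> X Y \<in> hom C (X \<odot> Y) (Y \<odot> X)"
  and sym_inv: "\<sigma> Y X \<cdot> \<sigma> X Y = idm (X \<odot> Y)"
  and hexagon: "\<alpha> Y Z X \<cdot> (\<sigma> X (Y \<odot> Z) \<cdot> \<alpha> X Y Z) = (idm Y \<otimes> \<sigma> X Z) \<cdot> (\<alpha> Y X Z \<cdot> (\<sigma> X Y \<otimes> idm Z))"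
  using symmetric_monoidal_C by (simp_all add: symmetric_monoidal_def)

lemma sym_nat: "arr f \<Longrightarrow> arr g \<Longrightarrow> src f = X \<Longrightarrow> src g = X' \<Longrightarrow> tgt f = Y \<Longrightarrow> tgt g = Y' \<Longrightarrow>
   \<sigma> Y Y' \<cdot> (f \<otimes> g) = (g \<otimes> f) \<cdot> \<sigma> X X'"
  using symmetric_monoidal_C hom_iff[of f X Y] hom_iff[of g X' Y'] by (simp add: symmetric_monoidal_def)

lemma ev_hom: "ev C B Z \<in> hom C (ihm C B Z \<odot> B) Z"
  and curry_exists1: "f \<in> hom C (X \<odot> B) Z \<Longrightarrow> \<exists>!g. g \<in> hom C X (ihm C B Z) \<and> ev C B Z \<cdot> (g \<otimes> idm B) = f"
  using closed_C by (simp_all add: closed_def)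

lemma assoc_hom: "\<alpha> X Y Z \<in> hom C ((X \<odot> Y) \<odot> Z) (X \<odot> (Y \<odot> Z))" using iso_assoc unfolding iso_def by blast

lemma lunit_hom: "lunit X \<in> hom C (\<I> \<odot> X) X" using iso_lunit unfolding iso_def by blast

lemma runit_hom: "runit X \<in> hom C (X \<odot> \<I>) X" using iso_runit unfolding iso_def by blast

lemma arr_assoc [simp]: "arr (\<alpha> X Y Z)" and src_assoc [simp]: "src (\<alpha> X Y Z) = (X \<odot> Y) \<odot> Z"
  and tgt_assoc [simp]: "tgt (\<alpha> X Y Z) = X \<odot> (Y \<odot> Z)" using assoc_hom by (simp_all add: hom_iff)

lemma arr_lunit [simp]: "arr (lunit X)" and src_lunit [simp]: "src (lunit X) = \<I> \<odot> X"
  and tgt_lunit [simp]: "tgt (lunit X) = X" using lunit_hom by (simp_all add: hom_iff)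

lemma arr_runit [simp]: "arr (runit X)" and src_runit [simp]: "src (runit X) = X \<odot> \<I>"
  and tgt_runit [simp]: "tgt (runit X) = X" using runit_hom by (simp_all add: hom_iff)

lemma arr_sym [simp]: "arr (\<sigma> X Y)" and src_sym [simp]: "src (\<sigma> X Y) = X \<odot> Y"
  and tgt_sym [simp]: "tgt (\<sigma> X Y) = Y \<odot> X" using sym_hom by (simp_all add: hom_iff)

lemma arr_ev [simp]: "arr (ev C B Z)" and src_ev [simp]: "src (ev C B Z) = ihm C B Z \<odot> B"
  and tgt_ev [simp]: "tgt (ev C B Z) = Z" using ev_hom by (simp_all add: hom_iff)

lemma curry_hom_ev: "arr f \<Longrightarrow> src f = X \<odot> B \<Longrightarrow> tgt f = Z \<Longrightarrow>
   curry_m C X B Z f \<in> hom C X (ihm C B Z) \<and> ev C B Z \<cdot> (curry_m C X B Z f \<otimes> idm B) = f"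
proof -
  assume a: "arr f" "src f = X \<odot> B" "tgt f = Z"
  then have "f \<in> hom C (X \<odot> B) Z" using hom_iff by blast
  from curry_exists1[OF this] show ?thesis unfolding curry_m_def by (rule theI')
qed

lemma arr_curry [simp]: "arr f \<Longrightarrow> src f = X \<odot> B \<Longrightarrow> tgt f = Z \<Longrightarrow> arr (curry_m C X B Z f)"
  and src_curry [simp]: "arr f \<Longrightarrow> src f = X \<odot> B \<Longrightarrow> tgt f = Z \<Longrightarrow> src (curry_m C X B Z f) = X"
  and tgt_curry [simp]: "arr f \<Longrightarrow> src f = X \<odot> B \<Longrightarrow> tgt f = Z \<Longrightarrow> tgt (curry_m C X B Z f) = ihm C B Z"
  using curry_hom_ev by (simp_all add: hom_iff)

lemma curry_ev [simp]: "arr f \<Longrightarrow> src f = X \<odot> B \<Longrightarrow> tgt f = Z \<Longrightarrow> ev C B Z \<cdot> (curry_m C X B Z f \<otimes> idm B) = f"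
  using curry_hom_ev by blast

lemma uncurry_inject: "arr g \<Longrightarrow> src g = X \<Longrightarrow> tgt g = ihm C B Z \<Longrightarrow> arr g' \<Longrightarrow> src g' = X \<Longrightarrow> tgt g' = ihm C B Z \<Longrightarrow>
   ev C B Z \<cdot> (g \<otimes> idm B) = ev C B Z \<cdot> (g' \<otimes> idm B) \<Longrightarrow> g = g'"
proof -
  assume a: "arr g" "src g = X" "tgt g = ihm C B Z" "arr g'" "src g' = X" "tgt g' = ihm C B Z"
    and e: "ev C B Z \<cdot> (g \<otimes> idm B) = ev C B Z \<cdot> (g' \<otimes> idm B)"
  have h: "g \<in> hom C X (ihm C B Z)" "g' \<in> hom C X (ihm C B Z)" using a by (simp_all add: hom_iff)
  have P: "ev C B Z \<cdot> (g \<otimes> idm B) \<in> hom C (X \<odot> B) Z"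
    by (rule comp_hom[OF tensor_hom[OF h(1) id_hom] ev_hom])
  note ex = curry_exists1[OF P]
  have 1: "(THE k. k \<in> hom C X (ihm C B Z) \<and> ev C B Z \<cdot> (k \<otimes> idm B) = ev C B Z \<cdot> (g \<otimes> idm B)) = g"
    using h(1) by (intro the1_equality[OF ex]) simp
  have 2: "(THE k. k \<in> hom C X (ihm C B Z) \<and> ev C B Z \<cdot> (k \<otimes> idm B) = ev C B Z \<cdot> (g \<otimes> idm B)) = g'"
    using h(2) e by (intro the1_equality[OF ex]) simp
  from 1 2 show ?thesis by simp
qed

lemma iso_hom: "iso C i X Y \<Longrightarrow> i \<in> hom C X Y" by (simp add: iso_def)

definition iso_inv where "iso_inv i X Y = (SOME g. g \<in> hom C Y X \<and> g \<cdot> i = idm X \<and> i \<cdot> g = idm Y)"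

lemma iso_inv_props: "iso C i X Y \<Longrightarrow> iso_inv i X Y \<in> hom C Y X \<and> iso_inv i X Y \<cdot> i = idm X \<and> i \<cdot> iso_inv i X Y = idm Y"
  unfolding iso_def iso_inv_def by (rule someI_ex) blast

lemma iso_cancel_right: "iso C i X Y \<Longrightarrow> arr f \<Longrightarrow> arr g \<Longrightarrow> src f = Y \<Longrightarrow> src g = Y \<Longrightarrow> f \<cdot> i = g \<cdot> i \<Longrightarrow> f = g"
proof -
  assume i: "iso C i X Y" and a: "arr f" "arr g" "src f = Y" "src g = Y" and e: "f \<cdot> i = g \<cdot> i"
  note p = iso_inv_props[OF i]
  have hi: "arr i" "src i = X" "tgt i = Y" "arr (iso_inv i X Y)" "src (iso_inv i X Y) = Y" "tgt (iso_inv i X Y) = X"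
    using iso_hom[OF i] p by (simp_all add: hom_iff)
  have "f = f \<cdot> (i \<cdot> iso_inv i X Y)" using p a by simp
  also have "\<dots> = (f \<cdot> i) \<cdot> iso_inv i X Y" using hi a by simp
  also have "\<dots> = (g \<cdot> i) \<cdot> iso_inv i X Y" using e by simp
  also have "\<dots> = g \<cdot> (i \<cdot> iso_inv i X Y)" using hi a by simp
  also have "\<dots> = g" using p a by simp
  finally show ?thesis .
qed

lemma iso_cancel_left: "iso C i X Y \<Longrightarrow> arr f \<Longrightarrow> arr g \<Longrightarrow> tgt f = X \<Longrightarrow> tgt g = X \<Longrightarrow> i \<cdot> f = i \<cdot> g \<Longrightarrow> f = g"
proof -
  assume i: "iso C i X Y" and a: "arr f" "arr g" "tgt f = X" "tgt g = X" and e: "i \<cdot> f = i \<cdot> g"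
  note p = iso_inv_props[OF i]
  have hi: "arr i" "src i = X" "tgt i = Y" "arr (iso_inv i X Y)" "src (iso_inv i X Y) = Y" "tgt (iso_inv i X Y) = X"
    using iso_hom[OF i] p by (simp_all add: hom_iff)
  have "f = (iso_inv i X Y \<cdot> i) \<cdot> f" using p a by simp
  also have "\<dots> = iso_inv i X Y \<cdot> (i \<cdot> f)" using hi a by simp
  also have "\<dots> = iso_inv i X Y \<cdot> (i \<cdot> g)" using e by simp
  also have "\<dots> = (iso_inv i X Y \<cdot> i) \<cdot> g" using hi a by simp
  also have "\<dots> = g" using p a by simp
  finally show ?thesis .
qed

lemma iso_sym: "iso C (\<sigma> X Y) (X \<odot> Y) (Y \<odot> X)"
  unfolding iso_def using sym_hom sym_inv by blast

lemma iso_tensor: "iso C i X Y \<Longrightarrow> iso C j X' Y' \<Longrightarrow> iso C (i \<otimes> j) (X \<odot> X') (Y \<odot> Y')"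
proof -
  assume i: "iso C i X Y" and j: "iso C j X' Y'"
  note p = iso_inv_props[OF i] and q = iso_inv_props[OF j]
  have h: "arr i" "src i = X" "tgt i = Y" "arr (iso_inv i X Y)" "src (iso_inv i X Y) = Y" "tgt (iso_inv i X Y) = X"
    "arr j" "src j = X'" "tgt j = Y'" "arr (iso_inv j X' Y')" "src (iso_inv j X' Y') = Y'" "tgt (iso_inv j X' Y') = X'"
    using iso_hom[OF i] iso_hom[OF j] p q by (simp_all add: hom_iff)
  have "(iso_inv i X Y \<otimes> iso_inv j X' Y') \<cdot> (i \<otimes> j) = idm (X \<odot> X')"
    using h p q interchange[of i "iso_inv i X Y" j "iso_inv j X' Y'"] by simp
  moreover have "(i \<otimes> j) \<cdot> (iso_inv i X Y \<otimes> iso_inv j X' Y') = idm (Y \<odot> Y')"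
    using h p q interchange[of "iso_inv i X Y" i "iso_inv j X' Y'" j] by simp
  moreover have "iso_inv i X Y \<otimes> iso_inv j X' Y' \<in> hom C (Y \<odot> Y') (X \<odot> X')" using h hom_iff by simp
  moreover have "i \<otimes> j \<in> hom C (X \<odot> X') (Y \<odot> Y')" using h hom_iff by simp
  ultimately show ?thesis unfolding iso_def by blast
qed

lemma iso_comp: "iso C i X Y \<Longrightarrow> iso C j Y Z \<Longrightarrow> iso C (j \<cdot> i) X Z"
proof -
  assume i: "iso C i X Y" and j: "iso C j Y Z"
  note p = iso_inv_props[OF i] and q = iso_inv_props[OF j]
  have h: "arr i" "src i = X" "tgt i = Y" "arr (iso_inv i X Y)" "src (iso_inv i X Y) = Y" "tgt (iso_inv i X Y) = X"
    "arr j" "src j = Y" "tgt j = Z" "arr (iso_inv j Y Z)" "src (iso_inv j Y Z) = Z" "tgt (iso_inv j Y Z) = Y"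
    using iso_hom[OF i] iso_hom[OF j] p q by (simp_all add: hom_iff)
  have "(iso_inv i X Y \<cdot> iso_inv j Y Z) \<cdot> (j \<cdot> i) = iso_inv i X Y \<cdot> ((iso_inv j Y Z \<cdot> j) \<cdot> i)" using h by simp
  also have "\<dots> = idm X" using h p q by simp
  finally have 1: "(iso_inv i X Y \<cdot> iso_inv j Y Z) \<cdot> (j \<cdot> i) = idm X" .
  have "(j \<cdot> i) \<cdot> (iso_inv i X Y \<cdot> iso_inv j Y Z) = j \<cdot> ((i \<cdot> iso_inv i X Y) \<cdot> iso_inv j Y Z)" using h by simp
  also have "\<dots> = idm Z" using h p q by simp
  finally have 2: "(j \<cdot> i) \<cdot> (iso_inv i X Y \<cdot> iso_inv j Y Z) = idm Z" .
  have "iso_inv i X Y \<cdot> iso_inv j Y Z \<in> hom C Z X" "j \<cdot> i \<in> hom C X Z" using h hom_iff by simp_all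
  with 1 2 show ?thesis unfolding iso_def by blast
qed

lemma iso_id: "iso C (idm X) X X" unfolding iso_def using id_hom by force

definition ainv where "ainv X Y Z = iso_inv (\<alpha> X Y Z) ((X \<odot> Y) \<odot> Z) (X \<odot> (Y \<odot> Z))"

lemma ainv_props: "ainv X Y Z \<in> hom C (X \<odot> (Y \<odot> Z)) ((X \<odot> Y) \<odot> Z)"
   "ainv X Y Z \<cdot> \<alpha> X Y Z = idm ((X \<odot> Y) \<odot> Z)" "\<alpha> X Y Z \<cdot> ainv X Y Z = idm (X \<odot> (Y \<odot> Z))"
  using iso_inv_props[OF iso_assoc] unfolding ainv_def by blast+

lemma arr_ainv [simp]: "arr (ainv X Y Z)" and src_ainv [simp]: "src (ainv X Y Z) = X \<odot> (Y \<odot> Z)"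
  and tgt_ainv [simp]: "tgt (ainv X Y Z) = (X \<odot> Y) \<odot> Z" using ainv_props(1) by (simp_all add: hom_iff)

lemma ainv_assoc [simp]: "ainv X Y Z \<cdot> \<alpha> X Y Z = idm ((X \<odot> Y) \<odot> Z)"
  and assoc_ainv [simp]: "\<alpha> X Y Z \<cdot> ainv X Y Z = idm (X \<odot> (Y \<odot> Z))" using ainv_props by blast+

text \<open>Simp keeps composites right-associated; the following rules rewrite a prefix of such a
  composite with an equation between shorter composites.\<close>

lemma comp_reduce: "a \<cdot> b = d \<Longrightarrow> arr a \<Longrightarrow> arr b \<Longrightarrow> src a = tgt b \<Longrightarrow> arr r \<Longrightarrow> src b = tgt r \<Longrightarrow>
  a \<cdot> (b \<cdot> r) = d \<cdot> r"
proof -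
  assume h: "a \<cdot> b = d" "arr a" "arr b" "src a = tgt b" "arr r" "src b = tgt r"
  have "a \<cdot> (b \<cdot> r) = (a \<cdot> b) \<cdot> r" using h(2-) by simp
  then show ?thesis using h(1) by (simp only:)
qed

lemma comp_reduce3: "a \<cdot> (b \<cdot> c) = d \<Longrightarrow> arr a \<Longrightarrow> arr b \<Longrightarrow> arr c \<Longrightarrow> src a = tgt b \<Longrightarrow> src b = tgt c \<Longrightarrow> arr r \<Longrightarrow> src c = tgt r \<Longrightarrow>
  a \<cdot> (b \<cdot> (c \<cdot> r)) = d \<cdot> r"
proof -
  assume h: "a \<cdot> (b \<cdot> c) = d" "arr a" "arr b" "arr c" "src a = tgt b" "src b = tgt c" "arr r" "src c = tgt r"
  have "a \<cdot> (b \<cdot> (c \<cdot> r)) = (a \<cdot> (b \<cdot> c)) \<cdot> r" using h(2-) by simp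
  then show ?thesis using h(1) by (simp only:)
qed

lemma comp_reduce4: "a \<cdot> (b \<cdot> (c \<cdot> e)) = d \<Longrightarrow> arr a \<Longrightarrow> arr b \<Longrightarrow> arr c \<Longrightarrow> arr e \<Longrightarrow> src a = tgt b \<Longrightarrow> src b = tgt c \<Longrightarrow>
   src c = tgt e \<Longrightarrow> arr r \<Longrightarrow> src e = tgt r \<Longrightarrow>
  a \<cdot> (b \<cdot> (c \<cdot> (e \<cdot> r))) = d \<cdot> r"
proof -
  assume h: "a \<cdot> (b \<cdot> (c \<cdot> e)) = d" "arr a" "arr b" "arr c" "arr e" "src a = tgt b" "src b = tgt c"
   "src c = tgt e" "arr r" "src e = tgt r"
  have "a \<cdot> (b \<cdot> (c \<cdot> (e \<cdot> r))) = (a \<cdot> (b \<cdot> (c \<cdot> e))) \<cdot> r" using h(2-) by simp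
  then show ?thesis using h(1) by (simp only:)
qed

lemma comp_tensor_id [simp]: "arr f \<Longrightarrow> arr g \<Longrightarrow> src g = tgt f \<Longrightarrow> (g \<cdot> f) \<otimes> idm Y = (g \<otimes> idm Y) \<cdot> (f \<otimes> idm Y)"
  using interchange[of f g "idm Y" "idm Y"] by simp

lemma id_tensor_comp [simp]: "arr f \<Longrightarrow> arr g \<Longrightarrow> src g = tgt f \<Longrightarrow> idm Y \<otimes> (g \<cdot> f) = (idm Y \<otimes> g) \<cdot> (idm Y \<otimes> f)"
  using interchange[of "idm Y" "idm Y" f g] by simp

lemma unit_tensor_cancel_left: "arr f \<Longrightarrow> arr g \<Longrightarrow> src f = X \<Longrightarrow> src g = X \<Longrightarrow> tgt f = Y \<Longrightarrow> tgt g = Y \<Longrightarrow>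
  idm \<I> \<otimes> f = idm \<I> \<otimes> g \<Longrightarrow> f = g"
proof -
  assume a: "arr f" "arr g" "src f = X" "src g = X" "tgt f = Y" "tgt g = Y" and e: "idm \<I> \<otimes> f = idm \<I> \<otimes> g"
  have "f \<cdot> lunit X = lunit Y \<cdot> (idm \<I> \<otimes> f)" using lunit_nat[of f X Y] a by simp
  also have "\<dots> = g \<cdot> lunit X" using lunit_nat[of g X Y] a e by simp
  finally show ?thesis using iso_cancel_right[OF iso_lunit] a by blast
qed

lemma unit_tensor_cancel_right: "arr f \<Longrightarrow> arr g \<Longrightarrow> src f = X \<Longrightarrow> src g = X \<Longrightarrow> tgt f = Y \<Longrightarrow> tgt g = Y \<Longrightarrow>
  f \<otimes> idm \<I> = g \<otimes> idm \<I> \<Longrightarrow> f = g"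
proof -
  assume a: "arr f" "arr g" "src f = X" "src g = X" "tgt f = Y" "tgt g = Y" and e: "f \<otimes> idm \<I> = g \<otimes> idm \<I>"
  have "f \<cdot> runit X = runit Y \<cdot> (f \<otimes> idm \<I>)" using runit_nat[of f X Y] a by simp
  also have "\<dots> = g \<cdot> runit X" using runit_nat[of g X Y] a e by simp
  finally show ?thesis using iso_cancel_right[OF iso_runit] a by blast
qed

lemma lunit_assoc: "lunit (X \<odot> Y) \<cdot> \<alpha> \<I> X Y = lunit X \<otimes> idm Y"
proof -
  let ?J = "\<alpha> \<I> (\<I> \<odot> X) Y \<cdot> (\<alpha> \<I> \<I> X \<otimes> idm Y)"
  have J: "iso C ?J ((((\<I> \<odot> \<I>) \<odot> X) \<odot> Y)) (\<I> \<odot> ((\<I> \<odot> X) \<odot> Y))"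
    by (rule iso_comp[OF iso_tensor[OF iso_assoc iso_id] iso_assoc])
  have "(idm \<I> \<otimes> lunit (X \<odot> Y)) \<cdot> (idm \<I> \<otimes> \<alpha> \<I> X Y) \<cdot> ?J
      = (idm \<I> \<otimes> lunit (X \<odot> Y)) \<cdot> \<alpha> \<I> \<I> (X \<odot> Y) \<cdot> \<alpha> (\<I> \<odot> \<I>) X Y"
    using pentagon[of \<I> \<I> X Y] by simp
  also have "\<dots> = (runit \<I> \<otimes> idm (X \<odot> Y)) \<cdot> \<alpha> (\<I> \<odot> \<I>) X Y"
    by (simp add: comp_reduce[OF triangle])
  also have "\<dots> = \<alpha> \<I> X Y \<cdot> ((runit \<I> \<otimes> idm X) \<otimes> idm Y)"
    using assoc_nat[of "runit \<I>" "idm X" "idm Y"] by simp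
  also have "\<dots> = \<alpha> \<I> X Y \<cdot> ((idm \<I> \<otimes> lunit X) \<otimes> idm Y) \<cdot> (\<alpha> \<I> \<I> X \<otimes> idm Y)"
    using triangle[of \<I> X, symmetric] by simp
  also have "\<dots> = (idm \<I> \<otimes> (lunit X \<otimes> idm Y)) \<cdot> ?J"
    using comp_reduce[OF assoc_nat[of "idm \<I>" "lunit X" "idm Y"]] by simp
  finally have 1: "(idm \<I> \<otimes> lunit (X \<odot> Y)) \<cdot> (idm \<I> \<otimes> \<alpha> \<I> X Y) \<cdot> ?J = (idm \<I> \<otimes> (lunit X \<otimes> idm Y)) \<cdot> ?J" .
  have "(idm \<I> \<otimes> lunit (X \<odot> Y)) \<cdot> (idm \<I> \<otimes> \<alpha> \<I> X Y) = idm \<I> \<otimes> (lunit X \<otimes> idm Y)"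
    using iso_cancel_right[OF J] 1 by simp
  then have "idm \<I> \<otimes> (lunit (X \<odot> Y) \<cdot> \<alpha> \<I> X Y) = idm \<I> \<otimes> (lunit X \<otimes> idm Y)" by simp
  then show ?thesis by (rule unit_tensor_cancel_left[rotated 6]) simp_all
qed

lemma sym_inv_tensor_id [simp]: "(\<sigma> Y X \<otimes> idm Z) \<cdot> (\<sigma> X Y \<otimes> idm Z) = idm ((X \<odot> Y) \<odot> Z)"
  using comp_tensor_id[of "\<sigma> X Y" "\<sigma> Y X" Z] sym_inv by simp

lemma id_tensor_sym_inv [simp]: "(idm Z \<otimes> \<sigma> Y X) \<cdot> (idm Z \<otimes> \<sigma> X Y) = idm (Z \<odot> (X \<odot> Y))"
  using id_tensor_comp[of "\<sigma> X Y" "\<sigma> Y X" Z] sym_inv by simp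

lemmas [simp] = sym_inv comp_reduce[OF sym_inv] comp_reduce[OF sym_inv_tensor_id] comp_reduce[OF id_tensor_sym_inv]
  comp_reduce[OF ainv_assoc] comp_reduce[OF assoc_ainv]

lemma lunit_sym: "lunit X \<cdot> \<sigma> X \<I> = runit X"
proof -
  have "lunit (\<I> \<odot> X) \<cdot> (\<alpha> \<I> \<I> X \<cdot> (\<sigma> X (\<I> \<odot> \<I>) \<cdot> \<alpha> X \<I> \<I>)) =
        lunit (\<I> \<odot> X) \<cdot> ((idm \<I> \<otimes> \<sigma> X \<I>) \<cdot> (\<alpha> \<I> X \<I> \<cdot> (\<sigma> X \<I> \<otimes> idm \<I>)))"
    using hexagon[where X=X and Y=\<I> and Z=\<I>] by simp
  moreover have "lunit (\<I> \<odot> X) \<cdot> (\<alpha> \<I> \<I> X \<cdot> (\<sigma> X (\<I> \<odot> \<I>) \<cdot> \<alpha> X \<I> \<I>)) =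
     (lunit \<I> \<otimes> idm X) \<cdot> (\<sigma> X (\<I> \<odot> \<I>) \<cdot> \<alpha> X \<I> \<I>)"
    by (simp add: comp_reduce[OF lunit_assoc])
  moreover have "\<dots> = \<sigma> X \<I> \<cdot> ((idm X \<otimes> lunit \<I>) \<cdot> \<alpha> X \<I> \<I>)"
    using comp_reduce[OF sym_nat[of "idm X" "lunit \<I>", symmetric]] by simp
  moreover have "\<dots> = \<sigma> X \<I> \<cdot> (runit X \<otimes> idm \<I>)"
    by (simp add: triangle)
  moreover have "lunit (\<I> \<odot> X) \<cdot> ((idm \<I> \<otimes> \<sigma> X \<I>) \<cdot> (\<alpha> \<I> X \<I> \<cdot> (\<sigma> X \<I> \<otimes> idm \<I>))) =
     \<sigma> X \<I> \<cdot> (lunit (X \<odot> \<I>) \<cdot> (\<alpha> \<I> X \<I> \<cdot> (\<sigma> X \<I> \<otimes> idm \<I>)))"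
    using comp_reduce[OF lunit_nat[of "\<sigma> X \<I>"]] by simp
  moreover have "\<dots> = \<sigma> X \<I> \<cdot> ((lunit X \<otimes> idm \<I>) \<cdot> (\<sigma> X \<I> \<otimes> idm \<I>))"
    by (simp add: comp_reduce[OF lunit_assoc])
  ultimately have "\<sigma> X \<I> \<cdot> (runit X \<otimes> idm \<I>) = \<sigma> X \<I> \<cdot> ((lunit X \<cdot> \<sigma> X \<I>) \<otimes> idm \<I>)"
    by simp
  then have "runit X \<otimes> idm \<I> = (lunit X \<cdot> \<sigma> X \<I>) \<otimes> idm \<I>"
    by (rule iso_cancel_left[OF iso_sym, rotated 4]) simp_all
  then show ?thesis by (rule unit_tensor_cancel_right[rotated 6, symmetric]) simp_all
qed

lemma sym_tensor_right: "\<sigma> X (Y \<odot> Z) \<cdot> \<alpha> X Y Z = ainv Y Z X \<cdot> ((idm Y \<otimes> \<sigma> X Z) \<cdot> (\<alpha> Y X Z \<cdot> (\<sigma> X Y \<otimes> idm Z)))"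
proof -
  have "\<sigma> X (Y \<odot> Z) \<cdot> \<alpha> X Y Z = ainv Y Z X \<cdot> (\<alpha> Y Z X \<cdot> (\<sigma> X (Y \<odot> Z) \<cdot> \<alpha> X Y Z))" by simp
  also have "\<dots> = ainv Y Z X \<cdot> ((idm Y \<otimes> \<sigma> X Z) \<cdot> (\<alpha> Y X Z \<cdot> (\<sigma> X Y \<otimes> idm Z)))"
    by (simp only: hexagon)
  finally show ?thesis .
qed

lemma assoc_sym_tensor_right: "\<alpha> Y Z X \<cdot> \<sigma> X (Y \<odot> Z) = (idm Y \<otimes> \<sigma> X Z) \<cdot> (\<alpha> Y X Z \<cdot> ((\<sigma> X Y \<otimes> idm Z) \<cdot> ainv X Y Z))"
proof -
  have "\<alpha> Y Z X \<cdot> \<sigma> X (Y \<odot> Z) = \<alpha> Y Z X \<cdot> (\<sigma> X (Y \<odot> Z) \<cdot> (\<alpha> X Y Z \<cdot> ainv X Y Z))" by simp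
  also have "\<dots> = (idm Y \<otimes> \<sigma> X Z) \<cdot> (\<alpha> Y X Z \<cdot> ((\<sigma> X Y \<otimes> idm Z) \<cdot> ainv X Y Z))"
    by (subst comp_reduce3[OF hexagon]) simp_all
  finally show ?thesis .
qed

lemma hexagon_conj: "\<alpha> X Y Z \<cdot> ((\<sigma> Y X \<otimes> idm Z) \<cdot> ainv Y X Z) = \<sigma> (Y \<odot> Z) X \<cdot> (ainv Y Z X \<cdot> (idm Y \<otimes> \<sigma> X Z))"
proof -
  have J: "iso C (\<alpha> Y X Z \<cdot> (\<sigma> X Y \<otimes> idm Z)) ((X \<odot> Y) \<odot> Z) (Y \<odot> (X \<odot> Z))"
    by (rule iso_comp[OF iso_tensor[OF iso_sym iso_id] iso_assoc])
  have "(\<sigma> (Y \<odot> Z) X \<cdot> (ainv Y Z X \<cdot> (idm Y \<otimes> \<sigma> X Z))) \<cdot> (\<alpha> Y X Z \<cdot> (\<sigma> X Y \<otimes> idm Z))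
     = \<sigma> (Y \<odot> Z) X \<cdot> (ainv Y Z X \<cdot> (\<alpha> Y Z X \<cdot> (\<sigma> X (Y \<odot> Z) \<cdot> \<alpha> X Y Z)))"
    by (simp add: hexagon comp_reduce3[OF hexagon])
  also have "\<dots> = \<alpha> X Y Z" by simp
  also have "\<dots> = (\<alpha> X Y Z \<cdot> ((\<sigma> Y X \<otimes> idm Z) \<cdot> ainv Y X Z)) \<cdot> (\<alpha> Y X Z \<cdot> (\<sigma> X Y \<otimes> idm Z))"
    by simp
  finally show ?thesis by (rule iso_cancel_right[OF J, rotated 4, symmetric]) simp_all
qed

lemma sym_tensor_left: "\<alpha> W X Y \<cdot> ((\<sigma> X W \<otimes> idm Y) \<cdot> (ainv X W Y \<cdot> ((idm X \<otimes> \<sigma> Y W) \<cdot> \<alpha> X Y W))) = \<sigma> (X \<odot> Y) W"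
proof -
  have "(\<alpha> W X Y \<cdot> ((\<sigma> X W \<otimes> idm Y) \<cdot> (ainv X W Y \<cdot> ((idm X \<otimes> \<sigma> Y W) \<cdot> \<alpha> X Y W)))) \<cdot> \<sigma> W (X \<odot> Y)
     = \<alpha> W X Y \<cdot> ((\<sigma> X W \<otimes> idm Y) \<cdot> (ainv X W Y \<cdot> ((idm X \<otimes> \<sigma> Y W) \<cdot> (\<alpha> X Y W \<cdot> \<sigma> W (X \<odot> Y)))))"
    by simp
  also have "\<dots> = \<alpha> W X Y \<cdot> ((\<sigma> X W \<otimes> idm Y) \<cdot> (ainv X W Y \<cdot> ((idm X \<otimes> \<sigma> Y W) \<cdot>
        ((idm X \<otimes> \<sigma> W Y) \<cdot> (\<alpha> X W Y \<cdot> ((\<sigma> W X \<otimes> idm Y) \<cdot> ainv W X Y))))))"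
    by (simp add: assoc_sym_tensor_right)
  also have "\<dots> = idm (W \<odot> (X \<odot> Y))" by simp
  also have "\<dots> = \<sigma> (X \<odot> Y) W \<cdot> \<sigma> W (X \<odot> Y)" by simp
  finally show ?thesis by (rule iso_cancel_right[OF iso_sym, rotated 4]) simp_all
qed

lemma tensor_id_commute: "arr f \<Longrightarrow> arr g \<Longrightarrow> src f = X \<Longrightarrow> tgt f = Y \<Longrightarrow> src g = X' \<Longrightarrow> tgt g = Y' \<Longrightarrow>
  (idm Y \<otimes> g) \<cdot> (f \<otimes> idm X') = (f \<otimes> idm Y') \<cdot> (idm X \<otimes> g)"
  using interchange[of "f" "idm Y" "idm X'" g] interchange[of "idm X" f g "idm Y'"] by simp

end

locale strong_monad_scmc = symmetric_closed_monoidal_category C for C :: "('o,'m) smcc" +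
  fixes T :: "('o,'m) smonad"
  assumes strong_monad_T: "strong_monad C T"
begin

abbreviation "MM \<equiv> Mm T"
abbreviation "MO \<equiv> Mo T"
abbreviation "\<eta> \<equiv> eta T"
abbreviation "\<mu> \<equiv> mu T"
abbreviation "\<tau> \<equiv> st T"
abbreviation "\<tau>' \<equiv> lst C T"

lemma monad_T: "monad C T"
  using strong_monad_T by (simp add: strong_monad_def)

lemma M_hom: "f \<in> hom C X Y \<Longrightarrow> MM f \<in> hom C (MO X) (MO Y)"
  and M_id [simp]: "MM (idm X) = idm (MO X)"
  and eta_hom: "\<eta> X \<in> hom C X (MO X)"
  and mu_hom: "\<mu> X \<in> hom C (MO (MO X)) (MO X)"
  and mu_assoc: "\<mu> X \<cdot> MM (\<mu> X) = \<mu> X \<cdot> \<mu> (MO X)"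
  and mu_eta [simp]: "\<mu> X \<cdot> \<eta> (MO X) = idm (MO X)"
  and mu_M_eta [simp]: "\<mu> X \<cdot> MM (\<eta> X) = idm (MO X)"
  using monad_T by (simp_all add: monad_def)

lemma M_comp [simp]: "arr f \<Longrightarrow> arr g \<Longrightarrow> src g = tgt f \<Longrightarrow> MM (g \<cdot> f) = MM g \<cdot> MM f"
  using monad_T hom_iff[of f "src f" "tgt f"] hom_iff[of g "tgt f" "tgt g"] by (simp add: monad_def)

lemma eta_nat: "arr f \<Longrightarrow> src f = X \<Longrightarrow> tgt f = Y \<Longrightarrow> \<eta> Y \<cdot> f = MM f \<cdot> \<eta> X"
  and mu_nat: "arr f \<Longrightarrow> src f = X \<Longrightarrow> tgt f = Y \<Longrightarrow> \<mu> Y \<cdot> MM (MM f) = MM f \<cdot> \<mu> X"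
  using monad_T hom_iff[of f X Y] by (simp_all add: monad_def)

lemma strength_hom: "\<tau> X Y \<in> hom C (MO X \<odot> Y) (MO (X \<odot> Y))"
  and strength_runit: "MM (runit X) \<cdot> \<tau> X \<I> = runit (MO X)"
  and strength_assoc: "\<tau> X (Y \<odot> Z) \<cdot> \<alpha> (MO X) Y Z = MM (\<alpha> X Y Z) \<cdot> (\<tau> (X \<odot> Y) Z \<cdot> (\<tau> X Y \<otimes> idm Z))"
  and strength_eta: "\<tau> X Y \<cdot> (\<eta> X \<otimes> idm Y) = \<eta> (X \<odot> Y)"
  and strength_mu: "\<tau> X Y \<cdot> (\<mu> X \<otimes> idm Y) = \<mu> (X \<odot> Y) \<cdot> (MM (\<tau> X Y) \<cdot> \<tau> (MO X) Y)"
  using strong_monad_T by (simp_all add: strong_monad_def)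

lemma strength_nat: "arr f \<Longrightarrow> arr g \<Longrightarrow> src f = X \<Longrightarrow> src g = X' \<Longrightarrow> tgt f = Y \<Longrightarrow> tgt g = Y' \<Longrightarrow>
   \<tau> Y Y' \<cdot> (MM f \<otimes> g) = MM (f \<otimes> g) \<cdot> \<tau> X X'"
  using strong_monad_T hom_iff[of f X Y] hom_iff[of g X' Y'] by (simp add: strong_monad_def)

lemma lstrength_hom: "\<tau>' X Y \<in> hom C (X \<odot> MO Y) (MO (X \<odot> Y))"
  unfolding lst_def by (rule comp_hom[OF comp_hom[OF sym_hom strength_hom] M_hom[OF sym_hom]])

lemma arr_eta [simp]: "arr (\<eta> X)" and src_eta [simp]: "src (\<eta> X) = X"
  and tgt_eta [simp]: "tgt (\<eta> X) = MO X" using eta_hom by (simp_all add: hom_iff)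

lemma arr_mu [simp]: "arr (\<mu> X)" and src_mu [simp]: "src (\<mu> X) = MO (MO X)"
  and tgt_mu [simp]: "tgt (\<mu> X) = MO X" using mu_hom by (simp_all add: hom_iff)

lemma arr_strength [simp]: "arr (\<tau> X Y)" and src_strength [simp]: "src (\<tau> X Y) = MO X \<odot> Y"
  and tgt_strength [simp]: "tgt (\<tau> X Y) = MO (X \<odot> Y)" using strength_hom by (simp_all add: hom_iff)

lemma arr_lstrength [simp]: "arr (\<tau>' X Y)" and src_lstrength [simp]: "src (\<tau>' X Y) = X \<odot> MO Y"
  and tgt_lstrength [simp]: "tgt (\<tau>' X Y) = MO (X \<odot> Y)" using lstrength_hom by (simp_all add: hom_iff)

lemma arr_M [simp]: "arr f \<Longrightarrow> arr (MM f)" and src_M [simp]: "arr f \<Longrightarrow> src (MM f) = MO (src f)"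
  and tgt_M [simp]: "arr f \<Longrightarrow> tgt (MM f) = MO (tgt f)" using M_hom[of f "src f" "tgt f"] hom_iff by auto

lemma M_ainv_assoc [simp]: "MM (ainv X Y Z) \<cdot> MM (\<alpha> X Y Z) = idm (MO ((X \<odot> Y) \<odot> Z))"
  using M_comp[of "\<alpha> X Y Z" "ainv X Y Z"] by simp

lemma M_assoc_ainv [simp]: "MM (\<alpha> X Y Z) \<cdot> MM (ainv X Y Z) = idm (MO (X \<odot> (Y \<odot> Z)))"
  using M_comp[of "ainv X Y Z" "\<alpha> X Y Z"] by simp

lemma M_sym_inv [simp]: "MM (\<sigma> Y X) \<cdot> MM (\<sigma> X Y) = idm (MO (X \<odot> Y))"
  using M_comp[of "\<sigma> X Y" "\<sigma> Y X"] sym_inv by simp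

lemmas [simp] = comp_reduce[OF M_ainv_assoc] comp_reduce[OF M_assoc_ainv] comp_reduce[OF M_sym_inv]
  comp_reduce[OF mu_eta] comp_reduce[OF mu_M_eta]

lemma M_comm_square: "a \<cdot> b = c \<cdot> d \<Longrightarrow> arr a \<Longrightarrow> arr b \<Longrightarrow> src a = tgt b \<Longrightarrow> arr c \<Longrightarrow> arr d \<Longrightarrow> src c = tgt d \<Longrightarrow>
  MM a \<cdot> MM b = MM c \<cdot> MM d"
  by (metis M_comp)

lemma lstrength_nat: "arr f \<Longrightarrow> arr g \<Longrightarrow> src f = X \<Longrightarrow> src g = X' \<Longrightarrow> tgt f = Y \<Longrightarrow> tgt g = Y' \<Longrightarrow>
   \<tau>' Y Y' \<cdot> (f \<otimes> MM g) = MM (f \<otimes> g) \<cdot> \<tau>' X X'"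
proof -
  assume a: "arr f" "arr g" "src f = X" "src g = X'" "tgt f = Y" "tgt g = Y'"
  have "\<tau>' Y Y' \<cdot> (f \<otimes> MM g) = MM (\<sigma> Y' Y) \<cdot> (\<tau> Y' Y \<cdot> (\<sigma> Y (MO Y') \<cdot> (f \<otimes> MM g)))"
    using a by (simp add: lst_def)
  also have "\<dots> = MM (\<sigma> Y' Y) \<cdot> (\<tau> Y' Y \<cdot> ((MM g \<otimes> f) \<cdot> \<sigma> X (MO X')))"
    using a by (simp add: sym_nat[of f "MM g"])
  also have "\<dots> = MM (\<sigma> Y' Y) \<cdot> (MM (g \<otimes> f) \<cdot> (\<tau> X' X \<cdot> \<sigma> X (MO X')))"
    using a by (simp add: comp_reduce[OF strength_nat[of g f]])
  also have "\<dots> = MM (f \<otimes> g) \<cdot> (MM (\<sigma> X' X) \<cdot> (\<tau> X' X \<cdot> \<sigma> X (MO X')))"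
    using a by (simp add: comp_reduce[OF M_comm_square[OF sym_nat[of g f]]])
  also have "\<dots> = MM (f \<otimes> g) \<cdot> \<tau>' X X'" by (simp add: lst_def)
  finally show ?thesis .
qed

lemma lstrength_eta: "\<tau>' X Y \<cdot> (idm X \<otimes> \<eta> Y) = \<eta> (X \<odot> Y)"
proof -
  have "\<tau>' X Y \<cdot> (idm X \<otimes> \<eta> Y) = MM (\<sigma> Y X) \<cdot> (\<tau> Y X \<cdot> (\<sigma> X (MO Y) \<cdot> (idm X \<otimes> \<eta> Y)))"
    by (simp add: lst_def)
  also have "\<dots> = MM (\<sigma> Y X) \<cdot> (\<tau> Y X \<cdot> ((\<eta> Y \<otimes> idm X) \<cdot> \<sigma> X Y))"
    by (simp add: sym_nat[of "idm X" "\<eta> Y"])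
  also have "\<dots> = MM (\<sigma> Y X) \<cdot> (\<eta> (Y \<odot> X) \<cdot> \<sigma> X Y)"
    by (simp add: comp_reduce[OF strength_eta])
  also have "\<dots> = \<eta> (X \<odot> Y) \<cdot> (\<sigma> Y X \<cdot> \<sigma> X Y)"
    by (simp add: comp_reduce[OF eta_nat[of "\<sigma> Y X", symmetric]])
  also have "\<dots> = \<eta> (X \<odot> Y)" by simp
  finally show ?thesis .
qed

lemma lstrength_mu: "\<tau>' X Y \<cdot> (idm X \<otimes> \<mu> Y) = \<mu> (X \<odot> Y) \<cdot> (MM (\<tau>' X Y) \<cdot> \<tau>' X (MO Y))"
proof -
  have "\<tau>' X Y \<cdot> (idm X \<otimes> \<mu> Y) = MM (\<sigma> Y X) \<cdot> (\<tau> Y X \<cdot> (\<sigma> X (MO Y) \<cdot> (idm X \<otimes> \<mu> Y)))"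
    by (simp add: lst_def)
  also have "\<dots> = MM (\<sigma> Y X) \<cdot> (\<tau> Y X \<cdot> ((\<mu> Y \<otimes> idm X) \<cdot> \<sigma> X (MO (MO Y))))"
    by (simp add: sym_nat[of "idm X" "\<mu> Y"])
  also have "\<dots> = MM (\<sigma> Y X) \<cdot> (\<mu> (Y \<odot> X) \<cdot> (MM (\<tau> Y X) \<cdot> (\<tau> (MO Y) X \<cdot> \<sigma> X (MO (MO Y)))))"
    by (simp add: comp_reduce[OF strength_mu])
  also have "\<dots> = \<mu> (X \<odot> Y) \<cdot> (MM (MM (\<sigma> Y X)) \<cdot> (MM (\<tau> Y X) \<cdot> (\<tau> (MO Y) X \<cdot> \<sigma> X (MO (MO Y)))))"
    by (simp add: comp_reduce[OF mu_nat[of "\<sigma> Y X", symmetric]])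
  also have "\<dots> = \<mu> (X \<odot> Y) \<cdot> (MM (\<tau>' X Y) \<cdot> \<tau>' X (MO Y))"
    by (simp add: lst_def)
  finally show ?thesis .
qed

lemma lstrength_lunit: "MM (lunit X) \<cdot> \<tau>' \<I> X = lunit (MO X)"
proof -
  have M_lunit_sym: "MM (lunit X) \<cdot> MM (\<sigma> X \<I>) = MM (runit X)"
    using M_comp[of "\<sigma> X \<I>" "lunit X"] lunit_sym by simp
  have "MM (lunit X) \<cdot> \<tau>' \<I> X = MM (lunit X) \<cdot> (MM (\<sigma> X \<I>) \<cdot> (\<tau> X \<I> \<cdot> \<sigma> \<I> (MO X)))"
    by (simp add: lst_def)
  also have "\<dots> = MM (runit X) \<cdot> (\<tau> X \<I> \<cdot> \<sigma> \<I> (MO X))"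
    by (simp add: comp_reduce[OF M_lunit_sym])
  also have "\<dots> = runit (MO X) \<cdot> \<sigma> \<I> (MO X)"
    by (simp add: comp_reduce[OF strength_runit])
  also have "\<dots> = lunit (MO X) \<cdot> (\<sigma> (MO X) \<I> \<cdot> \<sigma> \<I> (MO X))"
    by (simp add: lunit_sym[symmetric])
  also have "\<dots> = lunit (MO X)" by simp
  finally show ?thesis .
qed

lemma strength_strength: "\<tau> (X \<odot> Y) Z \<cdot> (\<tau> X Y \<otimes> idm Z) = MM (ainv X Y Z) \<cdot> (\<tau> X (Y \<odot> Z) \<cdot> \<alpha> (MO X) Y Z)"
proof -
  have "MM (ainv X Y Z) \<cdot> (\<tau> X (Y \<odot> Z) \<cdot> \<alpha> (MO X) Y Z) = MM (ainv X Y Z) \<cdot> (MM (\<alpha> X Y Z) \<cdot> (\<tau> (X \<odot> Y) Z \<cdot> (\<tau> X Y \<otimes> idm Z)))"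
    by (simp add: strength_assoc)
  also have "\<dots> = \<tau> (X \<odot> Y) Z \<cdot> (\<tau> X Y \<otimes> idm Z)" by simp
  finally show ?thesis by simp
qed

lemma strength_nat_right: "arr g \<Longrightarrow> src g = X' \<Longrightarrow> tgt g = Y' \<Longrightarrow> \<tau> X Y' \<cdot> (idm (MO X) \<otimes> g) = MM (idm X \<otimes> g) \<cdot> \<tau> X X'"
  using strength_nat[of "idm X" g X X' X Y'] by simp

lemma strength_lstrength_assoc: "MM (\<alpha> X Y Z) \<cdot> (\<tau> (X \<odot> Y) Z \<cdot> (\<tau>' X Y \<otimes> idm Z)) = \<tau>' X (Y \<odot> Z) \<cdot> ((idm X \<otimes> \<tau> Y Z) \<cdot> \<alpha> X (MO Y) Z)"
proof -
  have M_hexagon_conj: "MM (\<alpha> X Y Z) \<cdot> (MM (\<sigma> Y X \<otimes> idm Z) \<cdot> MM (ainv Y X Z)) =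
      MM (\<sigma> (Y \<odot> Z) X) \<cdot> (MM (ainv Y Z X) \<cdot> MM (idm Y \<otimes> \<sigma> X Z))"
  proof -
    have "MM (\<alpha> X Y Z \<cdot> ((\<sigma> Y X \<otimes> idm Z) \<cdot> ainv Y X Z)) =
        MM (\<sigma> (Y \<odot> Z) X \<cdot> (ainv Y Z X \<cdot> (idm Y \<otimes> \<sigma> X Z)))"
      using hexagon_conj by simp
    then show ?thesis by simp
  qed
  let ?N = "MM (\<sigma> (Y \<odot> Z) X) \<cdot> (MM (ainv Y Z X) \<cdot> (MM (idm Y \<otimes> \<sigma> X Z) \<cdot> (\<tau> Y (X \<odot> Z) \<cdot> (\<alpha> (MO Y) X Z \<cdot> (\<sigma> X (MO Y) \<otimes> idm Z)))))"
  have "MM (\<alpha> X Y Z) \<cdot> (\<tau> (X \<odot> Y) Z \<cdot> (\<tau>' X Y \<otimes> idm Z)) =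
     MM (\<alpha> X Y Z) \<cdot> (\<tau> (X \<odot> Y) Z \<cdot> ((MM (\<sigma> Y X) \<otimes> idm Z) \<cdot> ((\<tau> Y X \<otimes> idm Z) \<cdot> (\<sigma> X (MO Y) \<otimes> idm Z))))"
    by (simp add: lst_def)
  also have "\<dots> = MM (\<alpha> X Y Z) \<cdot> (MM (\<sigma> Y X \<otimes> idm Z) \<cdot> (\<tau> (Y \<odot> X) Z \<cdot> ((\<tau> Y X \<otimes> idm Z) \<cdot> (\<sigma> X (MO Y) \<otimes> idm Z))))"
    by (simp add: comp_reduce[OF strength_nat[of "\<sigma> Y X" "idm Z"]])
  also have "\<dots> = MM (\<alpha> X Y Z) \<cdot> (MM (\<sigma> Y X \<otimes> idm Z) \<cdot> (MM (ainv Y X Z) \<cdot> (\<tau> Y (X \<odot> Z) \<cdot> (\<alpha> (MO Y) X Z \<cdot> (\<sigma> X (MO Y) \<otimes> idm Z)))))"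
    by (simp add: comp_reduce[OF strength_strength])
  also have "\<dots> = ?N"
    by (subst comp_reduce3[OF M_hexagon_conj]) simp_all
  finally have 1: "MM (\<alpha> X Y Z) \<cdot> (\<tau> (X \<odot> Y) Z \<cdot> (\<tau>' X Y \<otimes> idm Z)) = ?N" .
  have "\<tau>' X (Y \<odot> Z) \<cdot> ((idm X \<otimes> \<tau> Y Z) \<cdot> \<alpha> X (MO Y) Z) =
     MM (\<sigma> (Y \<odot> Z) X) \<cdot> (\<tau> (Y \<odot> Z) X \<cdot> (\<sigma> X (MO (Y \<odot> Z)) \<cdot> ((idm X \<otimes> \<tau> Y Z) \<cdot> \<alpha> X (MO Y) Z)))"
    by (simp add: lst_def)
  also have "\<dots> = MM (\<sigma> (Y \<odot> Z) X) \<cdot> (\<tau> (Y \<odot> Z) X \<cdot> ((\<tau> Y Z \<otimes> idm X) \<cdot> (\<sigma> X (MO Y \<odot> Z) \<cdot> \<alpha> X (MO Y) Z)))"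
    by (simp add: comp_reduce[OF sym_nat[of "idm X" "\<tau> Y Z"]])
  also have "\<dots> = MM (\<sigma> (Y \<odot> Z) X) \<cdot> (\<tau> (Y \<odot> Z) X \<cdot> ((\<tau> Y Z \<otimes> idm X) \<cdot> (ainv (MO Y) Z X \<cdot> ((idm (MO Y) \<otimes> \<sigma> X Z) \<cdot> (\<alpha> (MO Y) X Z \<cdot> (\<sigma> X (MO Y) \<otimes> idm Z))))))"
    by (simp add: sym_tensor_right)
  also have "\<dots> = MM (\<sigma> (Y \<odot> Z) X) \<cdot> (MM (ainv Y Z X) \<cdot> (\<tau> Y (Z \<odot> X) \<cdot> ((idm (MO Y) \<otimes> \<sigma> X Z) \<cdot> (\<alpha> (MO Y) X Z \<cdot> (\<sigma> X (MO Y) \<otimes> idm Z)))))"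
    by (subst comp_reduce[OF strength_strength]) simp_all
  also have "\<dots> = ?N"
    by (simp add: comp_reduce[OF strength_nat_right[of "\<sigma> X Z"]])
  finally show ?thesis using 1 by simp
qed

lemma strength_lstrength_assoc': "\<tau>' X (Y \<odot> Z) \<cdot> (idm X \<otimes> \<tau> Y Z) = MM (\<alpha> X Y Z) \<cdot> (\<tau> (X \<odot> Y) Z \<cdot> ((\<tau>' X Y \<otimes> idm Z) \<cdot> ainv X (MO Y) Z))"
proof -
  have "\<tau>' X (Y \<odot> Z) \<cdot> (idm X \<otimes> \<tau> Y Z) = \<tau>' X (Y \<odot> Z) \<cdot> ((idm X \<otimes> \<tau> Y Z) \<cdot> (\<alpha> X (MO Y) Z \<cdot> ainv X (MO Y) Z))"
    by simp
  also have "\<dots> = MM (\<alpha> X Y Z) \<cdot> (\<tau> (X \<odot> Y) Z \<cdot> ((\<tau>' X Y \<otimes> idm Z) \<cdot> ainv X (MO Y) Z))"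
    by (subst comp_reduce3[OF strength_lstrength_assoc[symmetric]]) simp_all
  finally show ?thesis .
qed

lemma lstrength_assoc: "MM (\<alpha> X Y Z) \<cdot> \<tau>' (X \<odot> Y) Z = \<tau>' X (Y \<odot> Z) \<cdot> ((idm X \<otimes> \<tau>' Y Z) \<cdot> \<alpha> X Y (MO Z))"
proof -
  have M_assoc_sym_tensor: "MM (idm X \<otimes> \<sigma> Z Y) \<cdot> (MM (\<alpha> X Z Y) \<cdot> (MM (\<sigma> Z X \<otimes> idm Y) \<cdot> MM (ainv Z X Y))) =
      MM (\<alpha> X Y Z) \<cdot> MM (\<sigma> Z (X \<odot> Y))"
  proof -
    have "MM ((idm X \<otimes> \<sigma> Z Y) \<cdot> (\<alpha> X Z Y \<cdot> ((\<sigma> Z X \<otimes> idm Y) \<cdot> ainv Z X Y))) = MM (\<alpha> X Y Z \<cdot> \<sigma> Z (X \<odot> Y))"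
      using assoc_sym_tensor_right[of X Y Z] by simp
    then show ?thesis by simp
  qed
  have "\<tau>' X (Y \<odot> Z) \<cdot> ((idm X \<otimes> \<tau>' Y Z) \<cdot> \<alpha> X Y (MO Z)) =
     \<tau>' X (Y \<odot> Z) \<cdot> ((idm X \<otimes> MM (\<sigma> Z Y)) \<cdot> ((idm X \<otimes> \<tau> Z Y) \<cdot> ((idm X \<otimes> \<sigma> Y (MO Z)) \<cdot> \<alpha> X Y (MO Z))))"
    by (simp add: lst_def[of C T Y Z])
  also have "\<dots> = MM (idm X \<otimes> \<sigma> Z Y) \<cdot> (\<tau>' X (Z \<odot> Y) \<cdot> ((idm X \<otimes> \<tau> Z Y) \<cdot> ((idm X \<otimes> \<sigma> Y (MO Z)) \<cdot> \<alpha> X Y (MO Z))))"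
    by (subst comp_reduce[OF lstrength_nat[of "idm X" "\<sigma> Z Y" X "Z \<odot> Y" X "Y \<odot> Z"]]) simp_all
  also have "\<dots> = MM (idm X \<otimes> \<sigma> Z Y) \<cdot> (MM (\<alpha> X Z Y) \<cdot> (\<tau> (X \<odot> Z) Y \<cdot> ((\<tau>' X Z \<otimes> idm Y) \<cdot> (ainv X (MO Z) Y \<cdot>
      ((idm X \<otimes> \<sigma> Y (MO Z)) \<cdot> \<alpha> X Y (MO Z))))))"
    by (subst comp_reduce[OF strength_lstrength_assoc']) simp_all
  also have "\<dots> = MM (idm X \<otimes> \<sigma> Z Y) \<cdot> (MM (\<alpha> X Z Y) \<cdot> (\<tau> (X \<odot> Z) Y \<cdot> ((MM (\<sigma> Z X) \<otimes> idm Y) \<cdot> ((\<tau> Z X \<otimes> idm Y) \<cdot>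
     ((\<sigma> X (MO Z) \<otimes> idm Y) \<cdot> (ainv X (MO Z) Y \<cdot> ((idm X \<otimes> \<sigma> Y (MO Z)) \<cdot> \<alpha> X Y (MO Z))))))))"
    by (simp add: lst_def[of C T X Z])
  also have "\<dots> = MM (idm X \<otimes> \<sigma> Z Y) \<cdot> (MM (\<alpha> X Z Y) \<cdot> (MM (\<sigma> Z X \<otimes> idm Y) \<cdot> (\<tau> (Z \<odot> X) Y \<cdot> ((\<tau> Z X \<otimes> idm Y) \<cdot>
     ((\<sigma> X (MO Z) \<otimes> idm Y) \<cdot> (ainv X (MO Z) Y \<cdot> ((idm X \<otimes> \<sigma> Y (MO Z)) \<cdot> \<alpha> X Y (MO Z))))))))"
    by (subst comp_reduce[OF strength_nat[of "\<sigma> Z X" "idm Y" "Z \<odot> X" Y "X \<odot> Z" Y]]) simp_all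
  also have "\<dots> = MM (idm X \<otimes> \<sigma> Z Y) \<cdot> (MM (\<alpha> X Z Y) \<cdot> (MM (\<sigma> Z X \<otimes> idm Y) \<cdot> (MM (ainv Z X Y) \<cdot> (\<tau> Z (X \<odot> Y) \<cdot> (\<alpha> (MO Z) X Y \<cdot>
     ((\<sigma> X (MO Z) \<otimes> idm Y) \<cdot> (ainv X (MO Z) Y \<cdot> ((idm X \<otimes> \<sigma> Y (MO Z)) \<cdot> \<alpha> X Y (MO Z)))))))))"
    by (subst comp_reduce[OF strength_strength]) simp_all
  also have "\<dots> = MM (idm X \<otimes> \<sigma> Z Y) \<cdot> (MM (\<alpha> X Z Y) \<cdot> (MM (\<sigma> Z X \<otimes> idm Y) \<cdot> (MM (ainv Z X Y) \<cdot> (\<tau> Z (X \<odot> Y) \<cdot>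
     \<sigma> (X \<odot> Y) (MO Z)))))"
    by (simp only: sym_tensor_left)
  also have "\<dots> = MM (\<alpha> X Y Z) \<cdot> (MM (\<sigma> Z (X \<odot> Y)) \<cdot> (\<tau> Z (X \<odot> Y) \<cdot> \<sigma> (X \<odot> Y) (MO Z)))"
    by (subst comp_reduce4[OF M_assoc_sym_tensor]) simp_all
  also have "\<dots> = MM (\<alpha> X Y Z) \<cdot> \<tau>' (X \<odot> Y) Z" by (simp add: lst_def)
  finally show ?thesis by simp
qed

lemma lstrength_nat_left: "arr f \<Longrightarrow> src f = X \<Longrightarrow> tgt f = Y \<Longrightarrow> \<tau>' Y Z \<cdot> (f \<otimes> idm (MO Z)) = MM (f \<otimes> idm Z) \<cdot> \<tau>' X Z"
  using lstrength_nat[of f "idm Z" X Z Y Z] by simp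

lemma double_strength_strength_assoc:
  "MM (\<alpha> X Y Z) \<cdot> (\<tau> (X \<odot> Y) Z \<cdot> ((\<mu> (X \<odot> Y) \<otimes> idm Z) \<cdot> ((MM (\<tau>' X Y) \<otimes> idm Z) \<cdot> (\<tau> X (MO Y) \<otimes> idm Z)))) =
   \<mu> (X \<odot> (Y \<odot> Z)) \<cdot> (MM (\<tau>' X (Y \<odot> Z)) \<cdot> (\<tau> X (MO (Y \<odot> Z)) \<cdot> ((idm (MO X) \<otimes> \<tau> Y Z) \<cdot> \<alpha> (MO X) (MO Y) Z)))"
proof -
  have M_strength_lstrength_assoc: "MM (MM (\<alpha> X Y Z)) \<cdot> (MM (\<tau> (X \<odot> Y) Z) \<cdot> MM (\<tau>' X Y \<otimes> idm Z)) =
      MM (\<tau>' X (Y \<odot> Z)) \<cdot> (MM (idm X \<otimes> \<tau> Y Z) \<cdot> MM (\<alpha> X (MO Y) Z))"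
  proof -
    have "MM (MM (\<alpha> X Y Z) \<cdot> (\<tau> (X \<odot> Y) Z \<cdot> (\<tau>' X Y \<otimes> idm Z))) =
        MM (\<tau>' X (Y \<odot> Z) \<cdot> ((idm X \<otimes> \<tau> Y Z) \<cdot> \<alpha> X (MO Y) Z))"
      using strength_lstrength_assoc by simp
    then show ?thesis by simp
  qed
  have "MM (\<alpha> X Y Z) \<cdot> (\<tau> (X \<odot> Y) Z \<cdot> ((\<mu> (X \<odot> Y) \<otimes> idm Z) \<cdot> ((MM (\<tau>' X Y) \<otimes> idm Z) \<cdot> (\<tau> X (MO Y) \<otimes> idm Z)))) =
      MM (\<alpha> X Y Z) \<cdot> (\<mu> ((X \<odot> Y) \<odot> Z) \<cdot> (MM (\<tau> (X \<odot> Y) Z) \<cdot> (\<tau> (MO (X \<odot> Y)) Z \<cdot>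
        ((MM (\<tau>' X Y) \<otimes> idm Z) \<cdot> (\<tau> X (MO Y) \<otimes> idm Z)))))"
    by (subst comp_reduce[OF strength_mu]) simp_all
  also have "\<dots> = \<mu> (X \<odot> (Y \<odot> Z)) \<cdot> (MM (MM (\<alpha> X Y Z)) \<cdot> (MM (\<tau> (X \<odot> Y) Z) \<cdot> (\<tau> (MO (X \<odot> Y)) Z \<cdot>
        ((MM (\<tau>' X Y) \<otimes> idm Z) \<cdot> (\<tau> X (MO Y) \<otimes> idm Z)))))"
    by (subst comp_reduce[OF mu_nat[of "\<alpha> X Y Z" "(X \<odot> Y) \<odot> Z" "X \<odot> (Y \<odot> Z)", symmetric]]) simp_all
  also have "\<dots> = \<mu> (X \<odot> (Y \<odot> Z)) \<cdot> (MM (MM (\<alpha> X Y Z)) \<cdot> (MM (\<tau> (X \<odot> Y) Z) \<cdot> (MM (\<tau>' X Y \<otimes> idm Z) \<cdot>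
        (\<tau> (X \<odot> MO Y) Z \<cdot> (\<tau> X (MO Y) \<otimes> idm Z)))))"
    by (subst comp_reduce[OF strength_nat[of "\<tau>' X Y" "idm Z" "X \<odot> MO Y" Z "MO (X \<odot> Y)" Z]]) simp_all
  also have "\<dots> = \<mu> (X \<odot> (Y \<odot> Z)) \<cdot> (MM (\<tau>' X (Y \<odot> Z)) \<cdot> (MM (idm X \<otimes> \<tau> Y Z) \<cdot> (MM (\<alpha> X (MO Y) Z) \<cdot>
        (\<tau> (X \<odot> MO Y) Z \<cdot> (\<tau> X (MO Y) \<otimes> idm Z)))))"
    by (subst comp_reduce3[OF M_strength_lstrength_assoc]) simp_all
  also have "\<dots> = \<mu> (X \<odot> (Y \<odot> Z)) \<cdot> (MM (\<tau>' X (Y \<odot> Z)) \<cdot> (MM (idm X \<otimes> \<tau> Y Z) \<cdot> (\<tau> X (MO Y \<odot> Z) \<cdot> \<alpha> (MO X) (MO Y) Z)))"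
    by (simp only: strength_assoc[symmetric])
  also have "\<dots> = \<mu> (X \<odot> (Y \<odot> Z)) \<cdot> (MM (\<tau>' X (Y \<odot> Z)) \<cdot> (\<tau> X (MO (Y \<odot> Z)) \<cdot> ((idm (MO X) \<otimes> \<tau> Y Z) \<cdot> \<alpha> (MO X) (MO Y) Z)))"
    by (simp add: comp_reduce[OF strength_nat_right[of "\<tau> Y Z", symmetric]])
  finally show ?thesis .
qed

lemma double_strength_kleisli_right:
  assumes g: "arr g" "src g = V" "tgt g = MO Y" and r: "arr r" "tgt r = MO X \<odot> MO V"
  shows "\<mu> (X \<odot> Y) \<cdot> (MM (\<tau>' X Y) \<cdot> (\<tau> X (MO Y) \<cdot> ((idm (MO X) \<otimes> \<mu> Y) \<cdot> ((idm (MO X) \<otimes> MM g) \<cdot> r)))) =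
    \<mu> (X \<odot> Y) \<cdot> (MM (\<tau>' X Y) \<cdot> (MM (idm X \<otimes> g) \<cdot> (\<mu> (X \<odot> V) \<cdot> (MM (\<tau>' X V) \<cdot> (\<tau> X (MO V) \<cdot> r)))))"
proof -
  have M_lstrength_mu: "MM (\<tau>' X Y) \<cdot> MM (idm X \<otimes> \<mu> Y) = MM (\<mu> (X \<odot> Y)) \<cdot> (MM (MM (\<tau>' X Y)) \<cdot> MM (\<tau>' X (MO Y)))"
  proof -
    have "MM (\<tau>' X Y \<cdot> (idm X \<otimes> \<mu> Y)) = MM (\<mu> (X \<odot> Y) \<cdot> (MM (\<tau>' X Y) \<cdot> \<tau>' X (MO Y)))"
      using lstrength_mu by simp
    then show ?thesis by simp
  qed
  have "\<mu> (X \<odot> Y) \<cdot> (MM (\<tau>' X Y) \<cdot> (\<tau> X (MO Y) \<cdot> ((idm (MO X) \<otimes> \<mu> Y) \<cdot> ((idm (MO X) \<otimes> MM g) \<cdot> r)))) =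
      \<mu> (X \<odot> Y) \<cdot> (MM (\<tau>' X Y) \<cdot> (MM (idm X \<otimes> \<mu> Y) \<cdot> (MM (idm X \<otimes> MM g) \<cdot> (\<tau> X (MO V) \<cdot> r))))"
    using g r by (simp add: comp_reduce[OF strength_nat_right[of "\<mu> Y"]] comp_reduce[OF strength_nat_right[of "MM g"]])
  also have "\<dots> = \<mu> (X \<odot> Y) \<cdot> (MM (\<mu> (X \<odot> Y)) \<cdot> (MM (MM (\<tau>' X Y)) \<cdot> (MM (\<tau>' X (MO Y)) \<cdot>
      (MM (idm X \<otimes> MM g) \<cdot> (\<tau> X (MO V) \<cdot> r)))))"
    using g r by (subst comp_reduce[OF M_lstrength_mu]) simp_all
  also have "\<dots> = \<mu> (X \<odot> Y) \<cdot> (MM (\<mu> (X \<odot> Y)) \<cdot> (MM (MM (\<tau>' X Y)) \<cdot> (MM (MM (idm X \<otimes> g)) \<cdot>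
      (MM (\<tau>' X V) \<cdot> (\<tau> X (MO V) \<cdot> r)))))"
    using g r by (subst comp_reduce[OF M_comm_square[OF lstrength_nat[of "idm X" g X V X "MO Y"]]]) simp_all
  also have "\<dots> = \<mu> (X \<odot> Y) \<cdot> (\<mu> (MO (X \<odot> Y)) \<cdot> (MM (MM (\<tau>' X Y)) \<cdot> (MM (MM (idm X \<otimes> g)) \<cdot>
      (MM (\<tau>' X V) \<cdot> (\<tau> X (MO V) \<cdot> r)))))"
    using g r by (subst comp_reduce[OF mu_assoc]) simp_all
  also have "\<dots> = \<mu> (X \<odot> Y) \<cdot> (MM (\<tau>' X Y) \<cdot> (\<mu> (X \<odot> MO Y) \<cdot> (MM (MM (idm X \<otimes> g)) \<cdot>
      (MM (\<tau>' X V) \<cdot> (\<tau> X (MO V) \<cdot> r)))))"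
    using g r by (subst comp_reduce[OF mu_nat[of "\<tau>' X Y" "X \<odot> MO Y" "MO (X \<odot> Y)"]]) simp_all
  also have "\<dots> = \<mu> (X \<odot> Y) \<cdot> (MM (\<tau>' X Y) \<cdot> (MM (idm X \<otimes> g) \<cdot> (\<mu> (X \<odot> V) \<cdot> (MM (\<tau>' X V) \<cdot> (\<tau> X (MO V) \<cdot> r)))))"
    using g r by (subst comp_reduce[OF mu_nat[of "idm X \<otimes> g" "X \<odot> V" "X \<odot> MO Y"]]) simp_all
  finally show ?thesis .
qed

end

locale kleisli_exponential = strong_monad_scmc C T for C :: "('o,'m) smcc" and T :: "('o,'m) smonad" +
  fixes A :: 'o
begin

abbreviation "H \<equiv> ihm C A (MO A)"
abbreviation "e \<equiv> ev C A (MO A)"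
abbreviation "q \<equiv> \<mu> A \<cdot> (MM e \<cdot> \<tau> H A)"
abbreviation "alg \<equiv> curry_m C (MO H) A (MO A) q"

lemma alg_ev: "e \<cdot> (alg \<otimes> idm A) = q" by simp

lemmas alg_ev_simps = alg_ev comp_reduce[OF alg_ev]

lemma alg_eta: "alg \<cdot> \<eta> H = idm H"
proof (rule uncurry_inject[where X = H and B = A and Z = "MO A"])
  have "e \<cdot> ((alg \<cdot> \<eta> H) \<otimes> idm A) = q \<cdot> (\<eta> H \<otimes> idm A)"
    by (simp add: alg_ev_simps)
  also have "\<dots> = \<mu> A \<cdot> (MM e \<cdot> \<eta> (H \<odot> A))" by (simp add: strength_eta comp_reduce[OF strength_eta])
  also have "\<dots> = \<mu> A \<cdot> (\<eta> (MO A) \<cdot> e)" by (simp add: eta_nat[symmetric])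
  also have "\<dots> = e \<cdot> (idm H \<otimes> idm A)" by simp
  finally show "e \<cdot> ((alg \<cdot> \<eta> H) \<otimes> idm A) = e \<cdot> (idm H \<otimes> idm A)" .
qed simp_all

lemma alg_mu: "alg \<cdot> MM alg = alg \<cdot> \<mu> H"
proof (rule uncurry_inject[where X = "MO (MO H)" and B = A and Z = "MO A"])
  have "e \<cdot> ((alg \<cdot> MM alg) \<otimes> idm A) = q \<cdot> (MM alg \<otimes> idm A)"
    by (simp add: alg_ev_simps)
  also have "\<dots> = \<mu> A \<cdot> (MM e \<cdot> (MM (alg \<otimes> idm A) \<cdot> \<tau> (MO H) A))"
    by (simp add: strength_nat[of alg "idm A"])
  also have "\<dots> = \<mu> A \<cdot> (MM q \<cdot> \<tau> (MO H) A)"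
    by (subst comp_reduce[OF M_comm_square[OF alg_ev[unfolded comp_assoc]]]) simp_all
  also have "\<dots> = \<mu> A \<cdot> (MM (\<mu> A) \<cdot> (MM (MM e) \<cdot> (MM (\<tau> H A) \<cdot> \<tau> (MO H) A)))" by simp
  also have "\<dots> = \<mu> A \<cdot> (\<mu> (MO A) \<cdot> (MM (MM e) \<cdot> (MM (\<tau> H A) \<cdot> \<tau> (MO H) A)))" by (simp add: comp_reduce[OF mu_assoc])
  also have "\<dots> = \<mu> A \<cdot> (MM e \<cdot> (\<mu> (H \<odot> A) \<cdot> (MM (\<tau> H A) \<cdot> \<tau> (MO H) A)))" by (simp add: comp_reduce[OF mu_nat])
  also have "\<dots> = \<mu> A \<cdot> (MM e \<cdot> (\<tau> H A \<cdot> (\<mu> H \<otimes> idm A)))" by (simp add: strength_mu)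
  also have "\<dots> = e \<cdot> ((alg \<cdot> \<mu> H) \<otimes> idm A)" by (simp add: alg_ev_simps)
  finally show "e \<cdot> ((alg \<cdot> MM alg) \<otimes> idm A) = e \<cdot> ((alg \<cdot> \<mu> H) \<otimes> idm A)" .
qed simp_all

abbreviation "w \<equiv> \<mu> A \<cdot> (MM e \<cdot> (\<tau>' H A \<cdot> ((idm H \<otimes> e) \<cdot> \<alpha> H H A)))"
abbreviation "kc \<equiv> curry_m C (H \<odot> H) A (MO A) w"
abbreviation "ku \<equiv> curry_m C \<I> A (MO A) (\<eta> A \<cdot> lunit A)"

lemma kc_ev: "e \<cdot> (kc \<otimes> idm A) = w" by simp

lemmas kc_ev_simps = kc_ev comp_reduce[OF kc_ev]

lemma ku_ev: "e \<cdot> (ku \<otimes> idm A) = \<eta> A \<cdot> lunit A" by simp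

lemma kcomp_left_unit: "kc \<cdot> (ku \<otimes> idm H) = lunit H"
proof (rule uncurry_inject[where X = "\<I> \<odot> H" and B = A and Z = "MO A"])
  have "e \<cdot> ((kc \<cdot> (ku \<otimes> idm H)) \<otimes> idm A) = w \<cdot> ((ku \<otimes> idm H) \<otimes> idm A)"
    by (simp add: kc_ev_simps)
  also have "\<dots> = \<mu> A \<cdot> (MM e \<cdot> (\<tau>' H A \<cdot> ((idm H \<otimes> e) \<cdot> ((ku \<otimes> idm (H \<odot> A)) \<cdot> \<alpha> \<I> H A))))"
    using assoc_nat[of ku "idm H" "idm A"] by simp
  also have "\<dots> = \<mu> A \<cdot> (MM e \<cdot> (\<tau>' H A \<cdot> ((ku \<otimes> idm (MO A)) \<cdot> ((idm \<I> \<otimes> e) \<cdot> \<alpha> \<I> H A))))"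
    by (simp add: comp_reduce[OF tensor_id_commute[of ku e]])
  also have "\<dots> = \<mu> A \<cdot> (MM e \<cdot> (MM (ku \<otimes> idm A) \<cdot> (\<tau>' \<I> A \<cdot> ((idm \<I> \<otimes> e) \<cdot> \<alpha> \<I> H A))))"
    by (simp add: comp_reduce[OF lstrength_nat_left[of ku]])
  also have "\<dots> = \<mu> A \<cdot> (MM (\<eta> A) \<cdot> (MM (lunit A) \<cdot> (\<tau>' \<I> A \<cdot> ((idm \<I> \<otimes> e) \<cdot> \<alpha> \<I> H A))))"
    by (subst comp_reduce[OF M_comm_square[OF ku_ev[unfolded comp_assoc]]]) simp_all
  also have "\<dots> = lunit (MO A) \<cdot> ((idm \<I> \<otimes> e) \<cdot> \<alpha> \<I> H A)"
    by (simp add: comp_reduce[OF lstrength_lunit])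
  also have "\<dots> = e \<cdot> (lunit (H \<odot> A) \<cdot> \<alpha> \<I> H A)"
    by (simp add: comp_reduce[OF lunit_nat[of e]])
  also have "\<dots> = e \<cdot> (lunit H \<otimes> idm A)"
    by (simp add: lunit_assoc)
  finally show "e \<cdot> ((kc \<cdot> (ku \<otimes> idm H)) \<otimes> idm A) = e \<cdot> (lunit H \<otimes> idm A)" .
qed simp_all

lemma kcomp_right_unit: "kc \<cdot> (idm H \<otimes> ku) = runit H"
proof (rule uncurry_inject[where X = "H \<odot> \<I>" and B = A and Z = "MO A"])
  have "e \<cdot> ((kc \<cdot> (idm H \<otimes> ku)) \<otimes> idm A) = w \<cdot> ((idm H \<otimes> ku) \<otimes> idm A)"
    by (simp add: kc_ev_simps)
  also have "\<dots> = \<mu> A \<cdot> (MM e \<cdot> (\<tau>' H A \<cdot> ((idm H \<otimes> e) \<cdot> ((idm H \<otimes> (ku \<otimes> idm A)) \<cdot> \<alpha> H \<I> A))))"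
    using assoc_nat[of "idm H" ku "idm A"] by simp
  also have "\<dots> = \<mu> A \<cdot> (MM e \<cdot> (\<tau>' H A \<cdot> ((idm H \<otimes> \<eta> A) \<cdot> ((idm H \<otimes> lunit A) \<cdot> \<alpha> H \<I> A))))"
  proof -
    have m: "(idm H \<otimes> e) \<cdot> (idm H \<otimes> (ku \<otimes> idm A)) = (idm H \<otimes> \<eta> A) \<cdot> (idm H \<otimes> lunit A)"
      using id_tensor_comp[of "ku \<otimes> idm A" e H, symmetric] id_tensor_comp[of "lunit A" "\<eta> A" H] ku_ev by simp
    show ?thesis by (simp add: comp_reduce[OF m])
  qed
  also have "\<dots> = \<mu> A \<cdot> (MM e \<cdot> (\<eta> (H \<odot> A) \<cdot> ((idm H \<otimes> lunit A) \<cdot> \<alpha> H \<I> A)))"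
    by (simp add: comp_reduce[OF lstrength_eta])
  also have "\<dots> = e \<cdot> ((idm H \<otimes> lunit A) \<cdot> \<alpha> H \<I> A)"
    by (simp add: comp_reduce[OF eta_nat[of e, symmetric]])
  also have "\<dots> = e \<cdot> (runit H \<otimes> idm A)"
    by (simp add: triangle)
  finally show "e \<cdot> ((kc \<cdot> (idm H \<otimes> ku)) \<otimes> idm A) = e \<cdot> (runit H \<otimes> idm A)" .
qed simp_all

text \<open>Uncurried triple Kleisli composite: \<open>(((f, g), h), a) \<mapsto> f\<^sup>* (g\<^sup>* (h a))\<close>.\<close>

abbreviation "kleisli_run3 \<equiv>
  \<mu> A \<cdot> (MM e \<cdot> (\<tau>' H A \<cdot> ((idm H \<otimes> \<mu> A) \<cdot> ((idm H \<otimes> MM e) \<cdot> ((idm H \<otimes> \<tau>' H A) \<cdot>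
    (\<alpha> H H (MO A) \<cdot> ((idm (H \<odot> H) \<otimes> e) \<cdot> \<alpha> (H \<odot> H) H A)))))))"

lemma uncurry_kcomp_assoc_left: "e \<cdot> ((kc \<cdot> (kc \<otimes> idm H)) \<otimes> idm A) = kleisli_run3"
proof -
  have "e \<cdot> ((kc \<cdot> (kc \<otimes> idm H)) \<otimes> idm A) = w \<cdot> ((kc \<otimes> idm H) \<otimes> idm A)"
    by (simp add: kc_ev_simps)
  also have "\<dots> = \<mu> A \<cdot> (MM e \<cdot> (\<tau>' H A \<cdot> ((idm H \<otimes> e) \<cdot> ((kc \<otimes> idm (H \<odot> A)) \<cdot> \<alpha> (H \<odot> H) H A))))"
    using assoc_nat[of kc "idm H" "idm A"] by simp
  also have "\<dots> = \<mu> A \<cdot> (MM e \<cdot> (\<tau>' H A \<cdot> ((kc \<otimes> idm (MO A)) \<cdot> ((idm (H \<odot> H) \<otimes> e) \<cdot> \<alpha> (H \<odot> H) H A))))"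
    by (simp add: comp_reduce[OF tensor_id_commute[of kc e]])
  also have "\<dots> = \<mu> A \<cdot> (MM e \<cdot> (MM (kc \<otimes> idm A) \<cdot> (\<tau>' (H \<odot> H) A \<cdot> ((idm (H \<odot> H) \<otimes> e) \<cdot> \<alpha> (H \<odot> H) H A))))"
    by (simp add: comp_reduce[OF lstrength_nat_left[of kc]])
  also have "\<dots> = \<mu> A \<cdot> (MM (\<mu> A) \<cdot> (MM (MM e) \<cdot> (MM (\<tau>' H A) \<cdot> (MM (idm H \<otimes> e) \<cdot> (MM (\<alpha> H H A) \<cdot>
        (\<tau>' (H \<odot> H) A \<cdot> ((idm (H \<odot> H) \<otimes> e) \<cdot> \<alpha> (H \<odot> H) H A)))))))"
    by (subst comp_reduce[OF M_comm_square[OF kc_ev[unfolded comp_assoc]]]) simp_all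
  also have "\<dots> = \<mu> A \<cdot> (MM (\<mu> A) \<cdot> (MM (MM e) \<cdot> (MM (\<tau>' H A) \<cdot> (MM (idm H \<otimes> e) \<cdot> (\<tau>' H (H \<odot> A) \<cdot> ((idm H \<otimes> \<tau>' H A) \<cdot>
        (\<alpha> H H (MO A) \<cdot> ((idm (H \<odot> H) \<otimes> e) \<cdot> \<alpha> (H \<odot> H) H A))))))))"
    by (subst comp_reduce[OF lstrength_assoc[of H H A]]) simp_all
  also have "\<dots> = \<mu> A \<cdot> (MM (\<mu> A) \<cdot> (MM (MM e) \<cdot> (MM (\<tau>' H A) \<cdot> (\<tau>' H (MO A) \<cdot> ((idm H \<otimes> MM e) \<cdot> ((idm H \<otimes> \<tau>' H A) \<cdot>
        (\<alpha> H H (MO A) \<cdot> ((idm (H \<odot> H) \<otimes> e) \<cdot> \<alpha> (H \<odot> H) H A))))))))"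
    by (subst comp_reduce[OF lstrength_nat[of "idm H" e H "H \<odot> A" H "MO A", symmetric]]) simp_all
  also have "\<dots> = \<mu> A \<cdot> (\<mu> (MO A) \<cdot> (MM (MM e) \<cdot> (MM (\<tau>' H A) \<cdot> (\<tau>' H (MO A) \<cdot> ((idm H \<otimes> MM e) \<cdot> ((idm H \<otimes> \<tau>' H A) \<cdot>
        (\<alpha> H H (MO A) \<cdot> ((idm (H \<odot> H) \<otimes> e) \<cdot> \<alpha> (H \<odot> H) H A))))))))"
    by (subst comp_reduce[OF mu_assoc]) simp_all
  also have "\<dots> = \<mu> A \<cdot> (MM e \<cdot> (\<mu> (H \<odot> A) \<cdot> (MM (\<tau>' H A) \<cdot> (\<tau>' H (MO A) \<cdot> ((idm H \<otimes> MM e) \<cdot> ((idm H \<otimes> \<tau>' H A) \<cdot>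
        (\<alpha> H H (MO A) \<cdot> ((idm (H \<odot> H) \<otimes> e) \<cdot> \<alpha> (H \<odot> H) H A))))))))"
    by (subst comp_reduce[OF mu_nat[of e "H \<odot> A" "MO A"]]) simp_all
  also have "\<dots> = kleisli_run3"
    by (subst comp_reduce3[OF lstrength_mu[symmetric]]) simp_all
  finally show ?thesis .
qed

lemma uncurry_kcomp_assoc_right: "e \<cdot> ((kc \<cdot> ((idm H \<otimes> kc) \<cdot> \<alpha> H H H)) \<otimes> idm A) = kleisli_run3"
proof -
  have m2: "(idm H \<otimes> e) \<cdot> (idm H \<otimes> (kc \<otimes> idm A)) = idm H \<otimes> w"
    using id_tensor_comp[of "kc \<otimes> idm A" e H, symmetric] kc_ev by simp
  have "e \<cdot> ((kc \<cdot> ((idm H \<otimes> kc) \<cdot> \<alpha> H H H)) \<otimes> idm A) = w \<cdot> (((idm H \<otimes> kc) \<otimes> idm A) \<cdot> (\<alpha> H H H \<otimes> idm A))"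
    by (simp add: kc_ev_simps)
  also have "\<dots> = \<mu> A \<cdot> (MM e \<cdot> (\<tau>' H A \<cdot> ((idm H \<otimes> e) \<cdot> ((idm H \<otimes> (kc \<otimes> idm A)) \<cdot> (\<alpha> H (H \<odot> H) A \<cdot> (\<alpha> H H H \<otimes> idm A))))))"
    by (simp add: comp_reduce[OF assoc_nat[of "idm H" kc "idm A"]])
  also have "\<dots> = \<mu> A \<cdot> (MM e \<cdot> (\<tau>' H A \<cdot> (( idm H \<otimes> w) \<cdot> (\<alpha> H (H \<odot> H) A \<cdot> (\<alpha> H H H \<otimes> idm A)))))"
    by (subst comp_reduce[OF m2]) simp_all
  also have "\<dots> = \<mu> A \<cdot> (MM e \<cdot> (\<tau>' H A \<cdot> ((idm H \<otimes> \<mu> A) \<cdot> ((idm H \<otimes> MM e) \<cdot> ((idm H \<otimes> \<tau>' H A) \<cdot>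
     ((idm H \<otimes> (idm H \<otimes> e)) \<cdot> ((idm H \<otimes> \<alpha> H H A) \<cdot> (\<alpha> H (H \<odot> H) A \<cdot> (\<alpha> H H H \<otimes> idm A)))))))))"
    by simp
  also have "\<dots> = \<mu> A \<cdot> (MM e \<cdot> (\<tau>' H A \<cdot> ((idm H \<otimes> \<mu> A) \<cdot> ((idm H \<otimes> MM e) \<cdot> ((idm H \<otimes> \<tau>' H A) \<cdot>
     ((idm H \<otimes> (idm H \<otimes> e)) \<cdot> (\<alpha> H H (H \<odot> A) \<cdot> \<alpha> (H \<odot> H) H A)))))))"
    by (simp only: pentagon[symmetric])
  also have "\<dots> = kleisli_run3"
    by (subst comp_reduce[OF assoc_nat[of "idm H" "idm H" e H H "H \<odot> A" H H "MO A", symmetric]]) simp_all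
  finally show ?thesis .
qed

lemma kcomp_assoc: "kc \<cdot> (kc \<otimes> idm H) = kc \<cdot> ((idm H \<otimes> kc) \<cdot> \<alpha> H H H)"
  by (rule uncurry_inject[where X = "(H \<odot> H) \<odot> H" and B = A and Z = "MO A"])
    (simp_all only: uncurry_kcomp_assoc_left uncurry_kcomp_assoc_right, simp_all)

text \<open>Uncurried form of both sides of the compatibility condition: on \<open>((u, v), a)\<close> with
  \<open>u, v \<in> M(A \<Rightarrow> MA)\<close>, draw \<open>f\<close> from \<open>u\<close>, then \<open>g\<close> from \<open>v\<close>, and run \<open>f\<^sup>* (g a)\<close>. The side
  \<open>\<Lambda>(w) \<circ> (\<Lambda>(q) \<otimes> \<Lambda>(q))\<close> draws from \<open>v\<close> before \<open>u\<close>, so commutativity is needed to reach it.\<close>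

abbreviation "kleisli_run_pair \<equiv>
  \<mu> A \<cdot> (MM e \<cdot> (\<mu> (H \<odot> A) \<cdot> (MM (\<tau>' H A) \<cdot> (MM (idm H \<otimes> e) \<cdot> (\<mu> (H \<odot> (H \<odot> A)) \<cdot>
    (MM (\<tau>' H (H \<odot> A)) \<cdot> (\<tau> H (MO (H \<odot> A)) \<cdot> ((idm (MO H) \<otimes> \<tau> H A) \<cdot> \<alpha> (MO H) (MO H) A))))))))"

lemma uncurry_alg_kcomp_left:
  "e \<cdot> ((alg \<cdot> (MM kc \<cdot> (\<mu> (H \<odot> H) \<cdot> (MM (\<tau>' H H) \<cdot> \<tau> H (MO H))))) \<otimes> idm A) = kleisli_run_pair"
proof -
  have "e \<cdot> ((alg \<cdot> (MM kc \<cdot> (\<mu> (H \<odot> H) \<cdot> (MM (\<tau>' H H) \<cdot> \<tau> H (MO H))))) \<otimes> idm A) =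
     q \<cdot> ((MM kc \<otimes> idm A) \<cdot> ((\<mu> (H \<odot> H) \<otimes> idm A) \<cdot> ((MM (\<tau>' H H) \<otimes> idm A) \<cdot> (\<tau> H (MO H) \<otimes> idm A))))"
    by (simp add: alg_ev_simps)
  also have "\<dots> = \<mu> A \<cdot> (MM e \<cdot> (MM (kc \<otimes> idm A) \<cdot> (\<tau> (H \<odot> H) A \<cdot> ((\<mu> (H \<odot> H) \<otimes> idm A) \<cdot>
      ((MM (\<tau>' H H) \<otimes> idm A) \<cdot> (\<tau> H (MO H) \<otimes> idm A))))))"
    by (simp add: comp_reduce[OF strength_nat[of kc "idm A"]])
  also have "\<dots> = \<mu> A \<cdot> (MM (\<mu> A) \<cdot> (MM (MM e) \<cdot> (MM (\<tau>' H A) \<cdot> (MM (idm H \<otimes> e) \<cdot> (MM (\<alpha> H H A) \<cdot>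
      (\<tau> (H \<odot> H) A \<cdot> ((\<mu> (H \<odot> H) \<otimes> idm A) \<cdot> ((MM (\<tau>' H H) \<otimes> idm A) \<cdot> (\<tau> H (MO H) \<otimes> idm A)))))))))"
    by (subst comp_reduce[OF M_comm_square[OF kc_ev[unfolded comp_assoc]]]) simp_all
  also have "\<dots> = \<mu> A \<cdot> (MM (\<mu> A) \<cdot> (MM (MM e) \<cdot> (MM (\<tau>' H A) \<cdot> (MM (idm H \<otimes> e) \<cdot> (\<mu> (H \<odot> (H \<odot> A)) \<cdot>
      (MM (\<tau>' H (H \<odot> A)) \<cdot> (\<tau> H (MO (H \<odot> A)) \<cdot> ((idm (MO H) \<otimes> \<tau> H A) \<cdot> \<alpha> (MO H) (MO H) A))))))))"
    by (simp only: double_strength_strength_assoc)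
  also have "\<dots> = \<mu> A \<cdot> (\<mu> (MO A) \<cdot> (MM (MM e) \<cdot> (MM (\<tau>' H A) \<cdot> (MM (idm H \<otimes> e) \<cdot> (\<mu> (H \<odot> (H \<odot> A)) \<cdot>
      (MM (\<tau>' H (H \<odot> A)) \<cdot> (\<tau> H (MO (H \<odot> A)) \<cdot> ((idm (MO H) \<otimes> \<tau> H A) \<cdot> \<alpha> (MO H) (MO H) A))))))))"
    by (subst comp_reduce[OF mu_assoc]) simp_all
  also have "\<dots> = kleisli_run_pair"
    by (subst comp_reduce[OF mu_nat[of e "H \<odot> A" "MO A"]]) simp_all
  finally show ?thesis .
qed

lemma uncurry_alg_kcomp_right:
  assumes "commutative_monad C T"
  shows "e \<cdot> ((kc \<cdot> (alg \<otimes> alg)) \<otimes> idm A) = kleisli_run_pair"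
proof -
  have commutativity: "\<mu> (H \<odot> A) \<cdot> (MM (\<tau> H A) \<cdot> \<tau>' (MO H) A) = \<mu> (H \<odot> A) \<cdot> (MM (\<tau>' H A) \<cdot> \<tau> H (MO A))"
    using assms by (simp add: commutative_monad_def)
  have alg_tensor_alg: "(idm H \<otimes> e) \<cdot> (alg \<otimes> (alg \<otimes> idm A)) = (alg \<otimes> idm (MO A)) \<cdot> (idm (MO H) \<otimes> q)"
    using interchange[of alg "idm H" "alg \<otimes> idm A" e] interchange[of "idm (MO H)" alg q "idm (MO A)"] alg_ev
    by simp
  have "e \<cdot> ((kc \<cdot> (alg \<otimes> alg)) \<otimes> idm A) = w \<cdot> ((alg \<otimes> alg) \<otimes> idm A)"
    by (simp add: kc_ev_simps)
  also have "\<dots> = \<mu> A \<cdot> (MM e \<cdot> (\<tau>' H A \<cdot> ((idm H \<otimes> e) \<cdot> ((alg \<otimes> (alg \<otimes> idm A)) \<cdot> \<alpha> (MO H) (MO H) A))))"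
    by (simp add: assoc_nat[of alg alg "idm A"])
  also have "\<dots> = \<mu> A \<cdot> (MM e \<cdot> (\<tau>' H A \<cdot> ((alg \<otimes> idm (MO A)) \<cdot> ((idm (MO H) \<otimes> q) \<cdot> \<alpha> (MO H) (MO H) A))))"
    by (subst comp_reduce[OF alg_tensor_alg]) simp_all
  also have "\<dots> = \<mu> A \<cdot> (MM e \<cdot> (MM (alg \<otimes> idm A) \<cdot> (\<tau>' (MO H) A \<cdot> ((idm (MO H) \<otimes> q) \<cdot> \<alpha> (MO H) (MO H) A))))"
    by (subst comp_reduce[OF lstrength_nat_left[of alg "MO H" H A]]) simp_all
  also have "\<dots> = \<mu> A \<cdot> (MM (\<mu> A) \<cdot> (MM (MM e) \<cdot> (MM (\<tau> H A) \<cdot> (\<tau>' (MO H) A \<cdot> ((idm (MO H) \<otimes> \<mu> A) \<cdot>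
      ((idm (MO H) \<otimes> MM e) \<cdot> ((idm (MO H) \<otimes> \<tau> H A) \<cdot> \<alpha> (MO H) (MO H) A)))))))"
    by (subst comp_reduce[OF M_comm_square[OF alg_ev[unfolded comp_assoc]]]) simp_all
  also have "\<dots> = \<mu> A \<cdot> (\<mu> (MO A) \<cdot> (MM (MM e) \<cdot> (MM (\<tau> H A) \<cdot> (\<tau>' (MO H) A \<cdot> ((idm (MO H) \<otimes> \<mu> A) \<cdot>
      ((idm (MO H) \<otimes> MM e) \<cdot> ((idm (MO H) \<otimes> \<tau> H A) \<cdot> \<alpha> (MO H) (MO H) A)))))))"
    by (subst comp_reduce[OF mu_assoc]) simp_all
  also have "\<dots> = \<mu> A \<cdot> (MM e \<cdot> (\<mu> (H \<odot> A) \<cdot> (MM (\<tau> H A) \<cdot> (\<tau>' (MO H) A \<cdot> ((idm (MO H) \<otimes> \<mu> A) \<cdot>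
      ((idm (MO H) \<otimes> MM e) \<cdot> ((idm (MO H) \<otimes> \<tau> H A) \<cdot> \<alpha> (MO H) (MO H) A)))))))"
    by (subst comp_reduce[OF mu_nat[of e "H \<odot> A" "MO A"]]) simp_all
  also have "\<dots> = \<mu> A \<cdot> (MM e \<cdot> (\<mu> (H \<odot> A) \<cdot> (MM (\<tau>' H A) \<cdot> (\<tau> H (MO A) \<cdot> ((idm (MO H) \<otimes> \<mu> A) \<cdot>
      ((idm (MO H) \<otimes> MM e) \<cdot> ((idm (MO H) \<otimes> \<tau> H A) \<cdot> \<alpha> (MO H) (MO H) A)))))))"
    by (subst comp_reduce3[OF commutativity]) simp_all
  also have "\<dots> = kleisli_run_pair"
    by (subst double_strength_kleisli_right[of e "H \<odot> A" A]) simp_all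
  finally show ?thesis .
qed

lemma alg_kcomp:
  assumes "commutative_monad C T"
  shows "alg \<cdot> (MM kc \<cdot> (\<mu> (H \<odot> H) \<cdot> (MM (\<tau>' H H) \<cdot> \<tau> H (MO H)))) = kc \<cdot> (alg \<otimes> alg)"
  by (rule uncurry_inject[where X = "MO H \<odot> MO H" and B = A and Z = "MO A"])
    (simp_all only: uncurry_alg_kcomp_left uncurry_alg_kcomp_right[OF assms], simp_all)

end

theorem theorem21:
  fixes C :: "('o,'m) smcc" and T :: "('o,'m) smonad" and A :: 'o
  assumes "symmetric_closed_monoidal C"
    and "commutative_monad C T"
  shows "sym_em_monoid C T (ihm C A (Mo T A))
           (curry_m C (Mo T (ihm C A (Mo T A))) A (Mo T A) (qmap C T A))
           (kcomp C T A) (kident C T A)"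
proof -
  interpret kleisli_exponential C T A
    using assms by unfold_locales (simp_all add: commutative_monad_def)
  have "alg \<in> hom C (MO H) H" "kc \<in> hom C (H \<odot> H) H" "ku \<in> hom C \<I> H"
    by (simp_all add: hom_iff)
  then show ?thesis
    unfolding sym_em_monoid_def em_algebra_def monoid_obj_def qmap_def kcomp_def kident_def Let_def
    using alg_eta alg_mu kcomp_assoc kcomp_left_unit kcomp_right_unit alg_kcomp[OF assms(2)] by blast
qed

end
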